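(* In the setting below, if $H_\varepsilon$ is $\mathcal R$-reversible with respect to $\mathcal R(q,p)=(Rq,-Rp)$, $R=\mathrm{diag}(-1,-1)$ (i.e. $X_{H_\varepsilon}\circ\mathcal R=-\mathcal RX_{H_\varepsilon}$), then $q_2\mapsto\mathcal L_\varepsilon(\pi,q_2)$ is an even function; moreover, if the loop is of type (B), then $q_2\mapsto L(\pi,q_2)$ is an even function.
   Context: $\mathbb T^2=(\mathbb R/2\pi\mathbb Z)^2$; $H_\varepsilon=H+\varepsilon H_*$ on $T^*\mathbb T^2$, $H(q,p)=\tfrac12\langle B(q)p,p\rangle+V(q)$ with $B,V$ smooth, $2\pi$-periodic, $B$ symmetric positive definite, $\frac{\partial B}{\partial q_2}(q_1,0)=0$, $V$ with a nondegenerate maximum at $q=0$, $V(0)=0$; $H_*$ smooth, $2\pi$-periodic in $q$. $O=(0,0,0,0)$, $O_\varepsilon$ its continuation; $\gamma$ is a homoclinic orbit of $O$ for $H$ in $\{q_2=0\}$, $q_1$ increasing from $0$ to $2\pi$. Near $\gamma$, $W^u_\varepsilon$ is the graph $p=\nabla S^u_\varepsilon(q)$ on a neighbourhood of $\{0\le q_1\le\pi+a',q_2=0\}$ and the stable manifold of $O_\varepsilon$ near $O_\varepsilon$ is $p=\nabla S^s_\varepsilon(q)$ on a neighbourhood of $\{-\pi-a'\le q_1\le0,q_2=0\}$; $\widehat S^s_\varepsilon(q_1,q_2)=S^s_\varepsilon(q_1-2\pi,q_2)+\sigma_\varepsilon$ ($\sigma_\varepsilon$ a constant), and $\mathcal L_\varepsilon=S^u_\varepsilon-\widehat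 S^s_\varepsilon$ near $(\pi,0)$. Type (B): for $\varepsilon=0$, $S:=S^u_0=\widehat S^s_0$ (coinciding manifolds). Then $\check q(t,q)$ solves $\dot q=B(q)\nabla S(q)$, $\check q(0,q)=q$, $\check x(t,q)=(\check q(t,q),\nabla S(\check q(t,q)))$ and $L(q)=-\int_{-\infty}^{\infty}[H_*(\check x(t,q))-H_*(O)]\,dt$. *)

theory Defs
  imports "HOL-Analysis.Analysis"
begin

(* Configuration space: the lift R^2 of T^2 = (R/2piZ)^2, points q = (q1,q2).
   Phase space T^*T^2 lifted: x = (q,p). *)
type_synonym pt = "real \<times> real"
type_synonym st = "(real \<times> real) \<times> (real \<times> real)"

definition pd :: "('a::real_normed_vector \<Rightarrow> real) \<Rightarrow> 'a \<Rightarrow> 'a \<Rightarrow> real" where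
  "pd f b x = deriv (\<lambda>t. f (x + t *\<^sub>R b)) 0"

definition grad :: "('a::euclidean_space \<Rightarrow> real) \<Rightarrow> 'a \<Rightarrow> 'a" where
  "grad f x = (\<Sum>b\<in>Basis. pd f b x *\<^sub>R b)"

(* C^infinity on an (open) set U: all iterated partial derivatives exist and are continuous;
   D l is the iterated partial derivative along the directions in the list l *)
definition smooth_on :: "'a::euclidean_space set \<Rightarrow> ('a \<Rightarrow> real) \<Rightarrow> bool" where
  "smooth_on U f \<longleftrightarrow>
     (\<exists>D :: 'a list \<Rightarrow> 'a \<Rightarrow> real. D [] = f \<and> (\<forall>l. continuous_on U (D l)) \<and>
        (\<forall>l x b. x \<in> U \<longrightarrow> b \<in> Basis \<longrightarrow>
            ((\<lambda>t. D l (x + t *\<^sub>R b)) has_real_derivative D (b # l) x) (at 0)))"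

definition ham_vf :: "(st \<Rightarrow> real) \<Rightarrow> st \<Rightarrow> st" where
  "ham_vf F x = (snd (grad F x), - fst (grad F x))"

definition Rlin :: "pt \<Rightarrow> pt" where
  "Rlin q = (- fst q, - snd q)"

definition calR :: "st \<Rightarrow> st" where
  "calR x = (Rlin (fst x), - Rlin (snd x))"

definition reversible :: "(st \<Rightarrow> real) \<Rightarrow> bool" where
  "reversible F \<longleftrightarrow> (\<forall>x. ham_vf F (calR x) = - calR (ham_vf F x))"

(* H(q,p) = 1/2 <B(q)p,p> + V(q) ; B q is the linear map p \<mapsto> B(q)p *)
definition Ham :: "(pt \<Rightarrow> pt \<Rightarrow> pt) \<Rightarrow> (pt \<Rightarrow> real) \<Rightarrow> st \<Rightarrow> real" where
  "Ham B V x = (1/2) * inner (B (fst x) (snd x)) (snd x) + V (fst x)"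

definition Heps :: "(pt \<Rightarrow> pt \<Rightarrow> pt) \<Rightarrow> (pt \<Rightarrow> real) \<Rightarrow> (st \<Rightarrow> real) \<Rightarrow> real \<Rightarrow> st \<Rightarrow> real" where
  "Heps B V Hs \<epsilon> x = Ham B V x + \<epsilon> * Hs x"

definition periodic2 :: "(pt \<Rightarrow> 'b) \<Rightarrow> bool" where
  "periodic2 f \<longleftrightarrow> (\<forall>q. f (q + (2*pi, 0)) = f q \<and> f (q + (0, 2*pi)) = f q)"

definition Wu_loc :: "(st \<Rightarrow> real) \<Rightarrow> st \<Rightarrow> st set \<Rightarrow> st set" where
  "Wu_loc F E N = {x. \<exists>y. y 0 = x \<and>
      (\<forall>t\<le>0. y t \<in> N \<and> (y has_vector_derivative ham_vf F (y t)) (at t within {..0})) \<and>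
      (y \<longlongrightarrow> E) at_bot}"

definition Ws_loc :: "(st \<Rightarrow> real) \<Rightarrow> st \<Rightarrow> st set \<Rightarrow> st set" where
  "Ws_loc F E N = {x. \<exists>y. y 0 = x \<and>
      (\<forall>t\<ge>0. y t \<in> N \<and> (y has_vector_derivative ham_vf F (y t)) (at t within {0..})) \<and>
      (y \<longlongrightarrow> E) at_top}"

definition Shat :: "(pt \<Rightarrow> real) \<Rightarrow> real \<Rightarrow> pt \<Rightarrow> real" where
  "Shat Ss \<sigma> q = Ss (q - (2*pi, 0)) + \<sigma>"

definition Lcal :: "(pt \<Rightarrow> real) \<Rightarrow> (pt \<Rightarrow> real) \<Rightarrow> real \<Rightarrow> pt \<Rightarrow> real" where
  "Lcal Su Ss \<sigma> q = Su q - Shat Ss \<sigma> q"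

definition typeB :: "(pt \<Rightarrow> real) \<Rightarrow> pt set \<Rightarrow> (pt \<Rightarrow> real) \<Rightarrow> pt set \<Rightarrow> real \<Rightarrow> bool" where
  "typeB Su Uu Ss Us \<sigma> \<longleftrightarrow>
     (\<forall>q \<in> Uu \<inter> (\<lambda>q. q + (2*pi, 0)) ` Us. Su q = Shat Ss \<sigma> q)"

definition Sglue :: "(pt \<Rightarrow> real) \<Rightarrow> pt set \<Rightarrow> (pt \<Rightarrow> real) \<Rightarrow> real \<Rightarrow> pt \<Rightarrow> real" where
  "Sglue Su Uu Ss \<sigma> q = (if q \<in> Uu then Su q else Shat Ss \<sigma> q)"

definition Sdom :: "pt set \<Rightarrow> pt set \<Rightarrow> pt set" where
  "Sdom Uu Us = Uu \<union> (\<lambda>q. q + (2*pi, 0)) ` Us"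

definition Lmel :: "(st \<Rightarrow> real) \<Rightarrow> (real \<Rightarrow> pt \<Rightarrow> pt) \<Rightarrow> (pt \<Rightarrow> real) \<Rightarrow> pt \<Rightarrow> real" where
  "Lmel Hs qc S q = - integral UNIV (\<lambda>t. Hs (qc t q, grad S (qc t q)) - Hs ((0,0),(0,0)))"

end

theory Submission
  imports Defs
begin

text \<open>
  Reversibility means that calR(q,p) = (-q,p) maps trajectories to trajectories run
  backwards; since calR fixes the equilibrium, it carries the local unstable manifold onto
  the local stable one. For the generating functions this reads \<nabla>S_s(-q) = \<nabla>S_u(q), so
  q2 \<mapsto> S_u(\<pi>,q2) + S_s(-\<pi>,-q2) is constant, which is the evenness of Lcal(\<pi>,-).

  For L: by the Hamilton-Jacobi equation H(q,\<nabla>S(q)) = 0 and the symmetry of the Hessian of S,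
  the curves t \<mapsto> (q(t), \<nabla>S(q(t))) solve Hamilton's equations. Reflecting the one through
  (\<pi>,q2) by calR, reversing time and translating by 2\<pi> gives a trajectory through the starting
  point of the one through (\<pi>,-q2); by uniqueness of solutions (the Hamiltonian vector field
  is locally Lipschitz) the two coincide. As H_* is periodic and, by reversibility of H_\<epsilon>
  and H, calR-invariant, the integrands defining L(\<pi>,q2) and L(\<pi>,-q2) are reflections of
  each other in t.
\<close>

section \<open>The reflection and reversibility\<close>

lemma calR_Pair [simp]: "calR (q, p) = (- q, p)"
  by (simp add: calR_def Rlin_def prod_eq_iff)

lemma calR_conv: "calR x = (- fst x, snd x)"
  by (cases x) simp

lemma bounded_linear_calR: "bounded_linear calR"
  unfolding calR_conv[abs_def]
  by (intro bounded_linear_Pair bounded_linear_minus bounded_linear_fst bounded_linear_snd)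

lemma calR_minus: "calR (- x) = - calR x"
  by (simp add: calR_conv)

lemma calR_zero [simp]: "calR 0 = 0"
  by (simp add: calR_conv zero_prod_def)

lemma norm_calR [simp]: "norm (calR x) = norm x"
  by (cases x) (simp add: norm_Pair)

lemma has_vector_derivative_reflect:
  assumes "(y has_vector_derivative v) (at (- t) within uminus ` S)"
  shows "((\<lambda>t. y (- t)) has_vector_derivative - v) (at t within S)"
proof -
  have "(uminus has_vector_derivative (-1)) (at t within S)"
    by (auto intro!: derivative_eq_intros)
  from vector_diff_chain_within[OF this] assms show ?thesis
    by (simp add: o_def)
qed

lemma reversible_reflected_solution:
  assumes "reversible F"
    and "(y has_vector_derivative ham_vf F (y (- t))) (at (- t) within uminus ` S)"
  shows "((\<lambda>t. calR (y (- t))) has_vector_derivative ham_vf F (calR (y (- t)))) (at t within S)"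
proof -
  have "((\<lambda>t. calR (y (- t))) has_vector_derivative calR (- ham_vf F (y (- t)))) (at t within S)"
    by (rule bounded_linear.has_vector_derivative[OF bounded_linear_calR
          has_vector_derivative_reflect[OF assms(2)]])
  moreover have "calR (- ham_vf F (y (- t))) = ham_vf F (calR (y (- t)))"
    using assms(1) unfolding reversible_def by (metis calR_minus)
  ultimately show ?thesis
    by simp
qed

lemma calR_Wu_loc_in_Ws_loc:
  assumes x: "x \<in> Wu_loc F E N" and rev: "reversible F" and E: "calR E = E"
  shows "calR x \<in> Ws_loc F E (calR ` N)"
proof -
  from x obtain y where y0: "y 0 = x"
    and yN: "\<And>t. t \<le> 0 \<Longrightarrow> y t \<in> N"
    and yd: "\<And>t. t \<le> 0 \<Longrightarrow> (y has_vector_derivative ham_vf F (y t)) (at t within {..0})"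
    and ylim: "(y \<longlongrightarrow> E) at_bot"
    unfolding Wu_loc_def by blast
  have minus_nonneg: "uminus ` {0::real..} = {..0}"
    by (force simp: image_iff intro: bexI[of _ "- _"])
  have "((\<lambda>t. calR (y (- t))) has_vector_derivative ham_vf F (calR (y (- t)))) (at t within {0..})"
    if "t \<ge> 0" for t
    using that by (intro reversible_reflected_solution[OF rev]) (simp add: minus_nonneg yd)
  moreover have "((\<lambda>t. y (- t)) \<longlongrightarrow> E) at_top"
    using ylim by (simp add: at_bot_mirror filterlim_filtermap)
  then have "((\<lambda>t. calR (y (- t))) \<longlongrightarrow> E) at_top"
    using bounded_linear.tendsto[OF bounded_linear_calR] E by metis
  ultimately show ?thesis
    unfolding Ws_loc_def using y0 yN by (intro CollectI exI[of _ "\<lambda>t. calR (y (- t))"]) auto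
qed

lemma reversible_isolated_equilibrium_calR_fixed:
  assumes "reversible F" "ham_vf F E = 0"
    and "E \<in> ball 0 r" "\<forall>x\<in>ball 0 r. ham_vf F x = 0 \<longrightarrow> x = E"
  shows "calR E = E"
proof -
  have "ham_vf F (calR E) = 0"
    using assms(1,2) unfolding reversible_def by (metis calR_zero minus_zero)
  moreover have "calR E \<in> ball 0 r"
    using assms(3) by simp
  ultimately show ?thesis
    using assms(4) by blast
qed

lemma Basis_pt: "(Basis :: pt set) = {(1,0), (0,1)}"
  by (auto simp: Basis_prod_def)

lemma Basis_st: "(Basis :: st set) = {((1,0), 0), ((0,1), 0), (0, (1,0)), (0, (0,1))}"
  by (auto simp: Basis_prod_def)

lemma grad_pt: "grad (f :: pt \<Rightarrow> real) x = (pd f (1,0) x, pd f (0,1) x)"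
  by (simp add: grad_def Basis_pt)

lemma grad_st: "grad (f :: st \<Rightarrow> real) x =
  ((pd f ((1,0), 0) x, pd f ((0,1), 0) x), (pd f (0, (1,0)) x, pd f (0, (0,1)) x))"
  by (simp add: grad_def Basis_st zero_prod_def)

lemma pd_eqI: "((\<lambda>t. f (x + t *\<^sub>R b)) has_real_derivative d) (at 0) \<Longrightarrow> pd f b x = d"
  unfolding pd_def by (rule DERIV_imp_deriv)

lemma has_derivative_pd:
  assumes "(f has_derivative L) (at x)"
  shows "((\<lambda>t. f (x + t *\<^sub>R b)) has_real_derivative L b) (at 0)"
proof -
  have "((\<lambda>t::real. x + t *\<^sub>R b) has_derivative (\<lambda>t. t *\<^sub>R b)) (at 0)"
    by (auto intro!: derivative_eq_intros)
  from has_derivative_compose[OF this] assms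
  have "((\<lambda>t. f (x + t *\<^sub>R b)) has_derivative (\<lambda>t. L (t *\<^sub>R b))) (at 0)"
    by simp
  moreover have "(\<lambda>t. L (t *\<^sub>R b)) = (*) (L b)"
    using has_derivative_linear[OF assms] by (auto simp: linear_scale)
  ultimately show ?thesis
    by (simp add: has_field_derivative_def)
qed

lemma has_derivative_grad:
  fixes f :: "'a::euclidean_space \<Rightarrow> real"
  assumes "(f has_derivative L) (at x)"
  shows "L = (\<lambda>h. inner (grad f x) h)"
proof
  fix h
  have lin: "linear L"
    using assms has_derivative_linear by blast
  have "inner (grad f x) h = (\<Sum>b\<in>Basis. L b * inner b h)"
    unfolding grad_def using pd_eqI[OF has_derivative_pd[OF assms]] by (simp add: inner_sum_left)
  also have "\<dots> = L (\<Sum>b\<in>Basis. inner h b *\<^sub>R b)"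
    using lin by (simp add: linear_sum linear_scale inner_commute mult.commute)
  finally show "L h = inner (grad f x) h"
    by (simp add: euclidean_representation)
qed

lemma pd_Basis_inner_grad:
  fixes f :: "'a::euclidean_space \<Rightarrow> real"
  assumes "e \<in> Basis"
  shows "pd f e x = inner (grad f x) e"
proof -
  have "inner (grad f x) e = (\<Sum>b\<in>Basis. pd f b x * inner b e)"
    by (simp add: grad_def inner_sum_left)
  also have "\<dots> = (\<Sum>b\<in>{e}. pd f b x * inner b e)"
    using assms by (intro sum.mono_neutral_right) (auto simp: inner_Basis)
  finally show ?thesis
    using assms by simp
qed

lemma pd_cong_open:
  assumes "open U" "x \<in> U" "\<And>y. y \<in> U \<Longrightarrow> f y = g y"
  shows "pd f b x = pd g b x"
proof -
  have "open ((\<lambda>t::real. x + t *\<^sub>R b) -` U)"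
    by (rule open_vimage[OF assms(1)]) (intro continuous_intros)
  then have "\<forall>\<^sub>F t in nhds 0. x + t *\<^sub>R b \<in> U"
    using assms(2) eventually_nhds_in_open by fastforce
  then have "\<forall>\<^sub>F t in nhds 0. f (x + t *\<^sub>R b) = g (x + t *\<^sub>R b)"
    by eventually_elim (use assms(3) in auto)
  then show ?thesis
    unfolding pd_def by (intro deriv_cong_ev) auto
qed

lemma grad_cong_open:
  assumes "open U" "x \<in> U" "\<And>y. y \<in> U \<Longrightarrow> f y = g y"
  shows "grad f x = grad g x"
  unfolding grad_def using pd_cong_open[OF assms] by simp

lemma pd_translate: "pd (\<lambda>q. f (q - c) + k) b x = pd f b (x - c)"
proof -
  have "((\<lambda>t. f (x + t *\<^sub>R b - c) + k) has_field_derivative D) (at 0)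
    \<longleftrightarrow> ((\<lambda>t. f (x - c + t *\<^sub>R b)) has_field_derivative D) (at 0)" for D
    unfolding has_real_derivative_iff_has_vector_derivative has_vector_derivative_add_const
    by (simp add: algebra_simps)
  then show ?thesis
    unfolding pd_def deriv_def by (simp add: algebra_simps)
qed

lemma grad_Shat: "grad (Shat Ss \<sigma>) x = grad Ss (x - (2*pi,0))"
  unfolding Shat_def[abs_def] grad_def pd_translate ..

lemma ham_vf_translate:
  fixes F :: "st \<Rightarrow> real"
  assumes "\<And>z. F (z + c) = F z"
  shows "ham_vf F (x + c) = ham_vf F x"
proof -
  have "x + c + t *\<^sub>R b = (x + t *\<^sub>R b) + c" for t and b :: st
    by (simp add: algebra_simps)
  then have "(\<lambda>t. F (x + c + t *\<^sub>R b)) = (\<lambda>t. F (x + t *\<^sub>R b))" for b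
    by (simp only: assms)
  then show ?thesis
    unfolding ham_vf_def grad_def pd_def by simp
qed

lemma constant_along_lines:
  fixes f :: "'a::real_normed_vector \<Rightarrow> real"
  assumes "\<And>y. ((\<lambda>t. f (y + t *\<^sub>R b)) has_real_derivative 0) (at 0)"
  shows "f (y + s *\<^sub>R b) = f y"
proof -
  have "((\<lambda>t. f (y + t *\<^sub>R b)) has_real_derivative 0) (at t)" for t
  proof -
    have "((\<lambda>s. f (y + (s + t) *\<^sub>R b)) has_real_derivative 0) (at 0)"
      using assms[of "y + t *\<^sub>R b"] by (simp add: algebra_simps)
    then show ?thesis
      using DERIV_shift[where f="\<lambda>s. f (y + s *\<^sub>R b)" and x=0 and z=t] by simp
  qed
  then show ?thesis
    using DERIV_isconst_all[of "\<lambda>t. f (y + t *\<^sub>R b)" s 0] by simp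
qed

lemma zero_line_derivatives_imp_constant:
  fixes f :: "'a::euclidean_space \<Rightarrow> real"
  assumes "\<And>y b. b \<in> Basis \<Longrightarrow> ((\<lambda>t. f (y + t *\<^sub>R b)) has_real_derivative 0) (at 0)"
  shows "f x = f 0"
proof -
  have "finite A \<Longrightarrow> A \<subseteq> Basis \<Longrightarrow> f (\<Sum>b\<in>A. (x \<bullet> b) *\<^sub>R b) = f 0" for A
  proof (induction A rule: finite_induct)
    case (insert b A)
    then have "f ((\<Sum>c\<in>A. (x \<bullet> c) *\<^sub>R c) + (x \<bullet> b) *\<^sub>R b) = f (\<Sum>c\<in>A. (x \<bullet> c) *\<^sub>R c)"
      by (intro constant_along_lines assms) auto
    with insert show ?case
      by (simp add: add.commute)
  qed simp
  from this[OF finite_Basis order_refl] show ?thesis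
    by (simp add: euclidean_representation)
qed

lemma zero_derivative_limit_eq:
  fixes g :: "real \<Rightarrow> real"
  assumes "convex S" "s \<in> S" "\<And>t. t \<in> S \<Longrightarrow> (g has_real_derivative 0) (at t within S)"
    and "(g \<longlongrightarrow> l) F" "F \<noteq> bot" "\<forall>\<^sub>F t in F. t \<in> S"
  shows "g s = l"
proof -
  obtain c where c: "\<forall>t\<in>S. g t = c"
    using has_field_derivative_zero_constant[OF assms(1,3)] by blast
  have "\<forall>\<^sub>F t in F. g t = c"
    using assms(6) by eventually_elim (use c in auto)
  with assms(4) have "((\<lambda>t. c) \<longlongrightarrow> l) F"
    by (simp add: tendsto_cong)
  with assms(5) have "c = l"
    by (simp add: tendsto_const_iff)
  then show ?thesis
    using c assms(2) by simp
qed

section \<open>Families of iterated partial derivatives\<close>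

text \<open>A witness for \<open>smooth_on\<close>: \<open>D (b # l)\<close> is the derivative of \<open>D l\<close> in direction
  \<open>b\<close>, so for instance \<open>D [(0,1), (1,0)]\<close> is \<open>\<partial>\<^sub>2\<partial>\<^sub>1 f\<close>.\<close>

definition partials_family ::
  "'a::euclidean_space set \<Rightarrow> ('a \<Rightarrow> real) \<Rightarrow> ('a list \<Rightarrow> 'a \<Rightarrow> real) \<Rightarrow> bool" where
  "partials_family U f D \<longleftrightarrow> D [] = f \<and> (\<forall>l. continuous_on U (D l)) \<and>
     (\<forall>l x b. x \<in> U \<longrightarrow> b \<in> Basis \<longrightarrow>
        ((\<lambda>t. D l (x + t *\<^sub>R b)) has_real_derivative D (b # l) x) (at 0))"

lemma smooth_on_iff_partials_family: "smooth_on U f \<longleftrightarrow> (\<exists>D. partials_family U f D)"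
  unfolding smooth_on_def partials_family_def by blast

lemma partials_family_SOME:
  "smooth_on U f \<Longrightarrow> partials_family U f (SOME D. partials_family U f D)"
  by (simp add: smooth_on_iff_partials_family someI_ex)

lemma partials_family_continuous_on: "partials_family U f D \<Longrightarrow> continuous_on U (D l)"
  unfolding partials_family_def by blast

lemma partials_family_pd:
  "partials_family U f D \<Longrightarrow> x \<in> U \<Longrightarrow> b \<in> Basis \<Longrightarrow> pd (D l) b x = D (b # l) x"
  unfolding partials_family_def by (intro pd_eqI) blast

lemma partials_family_deriv_fst:
  fixes U :: "pt set"
  assumes "partials_family U f D" "(a, c) \<in> U"
  shows "((\<lambda>t. D l (t, c)) has_real_derivative D ((1,0) # l) (a, c)) (at a)"
proof -
  have "((\<lambda>t. D l ((a, c) + t *\<^sub>R (1,0))) has_real_derivative D ((1,0) # l) (a, c)) (at 0)"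
    using assms unfolding partials_family_def by (auto simp: Basis_pt)
  then show ?thesis
    using DERIV_shift[where f="\<lambda>t. D l (t, c)" and x=0 and z=a] by (simp add: add.commute)
qed

lemma partials_family_deriv_snd:
  fixes U :: "pt set"
  assumes "partials_family U f D" "(a, c) \<in> U"
  shows "((\<lambda>t. D l (a, t)) has_real_derivative D ((0,1) # l) (a, c)) (at c)"
proof -
  have "((\<lambda>t. D l ((a, c) + t *\<^sub>R (0,1))) has_real_derivative D ((0,1) # l) (a, c)) (at 0)"
    using assms unfolding partials_family_def by (auto simp: Basis_pt)
  then show ?thesis
    using DERIV_shift[where f="\<lambda>t. D l (a, t)" and x=0 and z=c] by (simp add: add.commute)
qed

lemma smooth_on_deriv_snd:
  fixes U :: "pt set"
  assumes "smooth_on U f" "(a, c) \<in> U"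
  shows "((\<lambda>t. f (a, t)) has_real_derivative pd f (0,1) (a, c)) (at c)"
proof -
  obtain D where D: "partials_family U f D"
    using assms(1) smooth_on_iff_partials_family by blast
  then have "D [] = f"
    by (simp add: partials_family_def)
  then show ?thesis
    using partials_family_deriv_snd[OF D assms(2), of "[]"]
      partials_family_pd[OF D assms(2), of "(0,1)" "[]"] by (simp add: Basis_pt)
qed

lemma smooth_on_has_pd:
  assumes "smooth_on U f" "x \<in> U" "b \<in> Basis"
  shows "((\<lambda>t. f (x + t *\<^sub>R b)) has_real_derivative pd f b x) (at 0)"
proof -
  obtain D where "partials_family U f D"
    using assms(1) smooth_on_iff_partials_family by blast
  then have "((\<lambda>t. f (x + t *\<^sub>R b)) has_real_derivative D [b] x) (at 0)"
    using assms(2,3) unfolding partials_family_def by force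
  then show ?thesis
    using pd_eqI by metis
qed

lemma partials_family_grad:
  fixes U :: "pt set"
  assumes "partials_family U f D" "x \<in> U"
  shows "grad f x = (D [(1,0)] x, D [(0,1)] x)"
proof -
  have "f = D []"
    using assms unfolding partials_family_def by simp
  then show ?thesis
    using partials_family_pd[OF assms, of _ "[]"] by (simp add: grad_pt Basis_pt)
qed

lemma partials_family_translate:
  assumes "partials_family U f D"
  shows "partials_family ((\<lambda>q. q + c) ` U) (\<lambda>q. f (q - c) + k)
           (\<lambda>l. if l = [] then (\<lambda>q. f (q - c) + k) else (\<lambda>q. D l (q - c)))"
proof -
  have D0: "D [] = f" and cont: "\<And>l. continuous_on U (D l)"
    and der: "\<And>l x b. x \<in> U \<Longrightarrow> b \<in> Basis \<Longrightarrow> ((\<lambda>t. D l (x + t *\<^sub>R b)) has_real_derivative D (b # l) x) (at 0)"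
    using assms unfolding partials_family_def by auto
  have translate: "y \<in> (\<lambda>q. q + c) ` U \<longleftrightarrow> y - c \<in> U" for y
    by (auto simp: image_iff intro!: bexI[of _ "y - c"])
  have cont: "continuous_on ((\<lambda>q. q + c) ` U) (\<lambda>q. D l (q - c))" for l
    by (rule continuous_on_compose2[OF cont[of l]]) (auto intro!: continuous_intros simp: translate)
  show ?thesis
    unfolding partials_family_def
  proof (intro conjI allI impI)
    fix l
    show "continuous_on ((\<lambda>q. q + c) ` U) (if l = [] then (\<lambda>q. f (q - c) + k) else (\<lambda>q. D l (q - c)))"
      using cont[of l] cont[of "[]"] D0 by (auto intro!: continuous_intros)
  next
    fix l and x b :: 'a
    assume "x \<in> (\<lambda>q. q + c) ` U" "b \<in> Basis"
    then have d: "((\<lambda>t. D l (x - c + t *\<^sub>R b)) has_real_derivative D (b # l) (x - c)) (at 0)"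
      using der translate by blast
    show "((\<lambda>t. (if l = [] then (\<lambda>q. f (q - c) + k) else (\<lambda>q. D l (q - c))) (x + t *\<^sub>R b))
        has_real_derivative (if b # l = [] then (\<lambda>q. f (q - c) + k) else (\<lambda>q. D (b # l) (q - c))) x) (at 0)"
    proof (cases "l = []")
      case True
      then show ?thesis
        using d D0 by (auto intro!: derivative_eq_intros simp: algebra_simps)
    next
      case False
      then show ?thesis
        using d by (simp add: algebra_simps)
    qed
  qed simp
qed

lemma open_contains_square:
  fixes U :: "pt set"
  assumes "open U" "(x1, x2) \<in> U"
  obtains r where "r > 0" "\<And>a c. \<bar>a - x1\<bar> < r \<Longrightarrow> \<bar>c - x2\<bar> < r \<Longrightarrow> (a, c) \<in> U"
proof -
  obtain e where e: "e > 0" "ball (x1, x2) e \<subseteq> U"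
    using assms open_contains_ball by blast
  have "(a, c) \<in> U" if "\<bar>a - x1\<bar> < e/2" "\<bar>c - x2\<bar> < e/2" for a c
  proof -
    have "dist (x1, x2) (a, c) \<le> \<bar>x1 - a\<bar> + \<bar>x2 - c\<bar>"
      by (simp add: dist_Pair_Pair dist_real_def sqrt_sum_squares_le_sum_abs)
    also have "\<dots> < e"
      using that by linarith
    finally show ?thesis
      using e by auto
  qed
  then show ?thesis
    using that[of "e/2"] e by auto
qed

lemma partials_family_blinfun_mult_left_continuous:
  fixes U :: "pt set"
  assumes D: "partials_family U f D" and "open U" "x \<in> U"
  shows "continuous (at x within X) (\<lambda>z. blinfun_mult_left (D l z))"
proof -
  have "continuous (at x) (D l)"
    using partials_family_continuous_on[OF D] assms(2,3) by (metis continuous_on_eq_continuous_at)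
  then have "continuous (at x) (\<lambda>z. blinfun_mult_left (D l z))"
    by (rule continuous_at_compose[OF _ linear_continuous_at, unfolded o_def])
      (rule bounded_linear_blinfun_mult_left)
  then show ?thesis
    by (rule continuous_at_imp_continuous_within)
qed

lemma partials_family_has_derivative:
  fixes U :: "pt set"
  assumes D: "partials_family U f D" and U: "open U" and x: "x \<in> U"
  shows "(D l has_derivative (\<lambda>h. fst h * D ((1,0) # l) x + snd h * D ((0,1) # l) x)) (at x)"
proof -
  obtain x1 x2 where x12: "x = (x1, x2)"
    by (cases x)
  obtain r where r: "r > 0" "\<And>a c. \<bar>a - x1\<bar> < r \<Longrightarrow> \<bar>c - x2\<bar> < r \<Longrightarrow> (a, c) \<in> U"
    using open_contains_square[OF U] x x12 by blast
  define X where "X = {x1 - r <..< x1 + r}"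
  define Y where "Y = {x2 - r <..< x2 + r}"
  have XY: "a \<in> X \<Longrightarrow> c \<in> Y \<Longrightarrow> (a, c) \<in> U" for a c
    using r unfolding X_def Y_def by (auto simp: abs_less_iff)
  have x1X: "x1 \<in> X" and x2Y: "x2 \<in> Y"
    using r by (auto simp: X_def Y_def)
  have fx: "((\<lambda>a. D l (a, x2)) has_derivative (*) (D ((1,0) # l) x)) (at x1 within X)"
    using partials_family_deriv_fst[OF D XY[OF x1X x2Y]] x12
    by (auto simp: has_field_derivative_def intro: has_derivative_at_withinI)
  have fy: "((\<lambda>c. D l (a, c)) has_derivative blinfun_apply (blinfun_mult_left (D ((0,1) # l) (a, c))))
      (at c within Y)" if "a \<in> X" "c \<in> Y" for a c
  proof -
    have "blinfun_apply (blinfun_mult_left k) = (*) k" for k :: real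
      by (rule ext) (simp add: mult.commute)
    then show ?thesis
      using partials_family_deriv_snd[OF D XY[OF that]]
      by (auto simp: has_field_derivative_def intro: has_derivative_at_withinI)
  qed
  have fy_cont: "continuous (at (x1, x2) within X \<times> Y) (\<lambda>(a, c). blinfun_mult_left (D ((0,1) # l) (a, c)))"
    using partials_family_blinfun_mult_left_continuous[OF D U x] x12 by (simp add: case_prod_beta')
  have "convex Y"
    by (simp add: Y_def)
  from has_derivative_partialsI[where f="\<lambda>a c. D l (a, c)", OF fx fy fy_cont x2Y this]
  have "((\<lambda>(a, c). D l (a, c)) has_derivative
      (\<lambda>(ta, tc). ta * D ((1,0) # l) x + tc * D ((0,1) # l) (x1, x2))) (at (x1, x2) within X \<times> Y)"
    by (simp add: mult.commute)
  moreover have "open (X \<times> Y)"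
    by (auto simp: X_def Y_def intro!: open_Times)
  ultimately show ?thesis
    using at_within_open[of "(x1, x2)" "X \<times> Y"] x1X x2Y x12 by (simp add: case_prod_beta')
qed

lemma partials_family_differentiable:
  fixes f :: "pt \<Rightarrow> real"
  shows "partials_family UNIV f D \<Longrightarrow> D l differentiable (at x)"
  using partials_family_has_derivative[of UNIV f D x l] unfolding differentiable_def by auto

lemma partials_family_second_difference_12:
  fixes U :: "pt set"
  assumes D: "partials_family U f D" and h: "h > 0"
    and rect: "\<And>a c. x1 \<le> a \<Longrightarrow> a \<le> x1 + h \<Longrightarrow> x2 \<le> c \<Longrightarrow> c \<le> x2 + h \<Longrightarrow> (a, c) \<in> U"
  obtains \<xi> \<eta> where "x1 < \<xi>" "\<xi> < x1 + h" "x2 < \<eta>" "\<eta> < x2 + h"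
    "f (x1 + h, x2 + h) - f (x1 + h, x2) - f (x1, x2 + h) + f (x1, x2) = h * h * D [(0,1), (1,0)] (\<xi>, \<eta>)"
proof -
  have f: "f = D []"
    using D by (simp add: partials_family_def)
  have der: "((\<lambda>a. f (a, x2 + h) - f (a, x2)) has_real_derivative
      D [(1,0)] (a, x2 + h) - D [(1,0)] (a, x2)) (at a)" if "x1 \<le> a" "a \<le> x1 + h" for a
    unfolding f using that h by (intro DERIV_diff partials_family_deriv_fst[OF D] rect) auto
  obtain \<xi> where \<xi>: "x1 < \<xi>" "\<xi> < x1 + h"
    "(f (x1 + h, x2 + h) - f (x1 + h, x2)) - (f (x1, x2 + h) - f (x1, x2))
      = h * (D [(1,0)] (\<xi>, x2 + h) - D [(1,0)] (\<xi>, x2))"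
    using MVT2[of x1 "x1 + h", OF _ der] h by auto
  have der: "((\<lambda>c. D [(1,0)] (\<xi>, c)) has_real_derivative D [(0,1), (1,0)] (\<xi>, c)) (at c)"
    if "x2 \<le> c" "c \<le> x2 + h" for c
    using that \<xi> by (intro partials_family_deriv_snd[OF D] rect) auto
  obtain \<eta> where \<eta>: "x2 < \<eta>" "\<eta> < x2 + h"
    "D [(1,0)] (\<xi>, x2 + h) - D [(1,0)] (\<xi>, x2) = h * D [(0,1), (1,0)] (\<xi>, \<eta>)"
    using MVT2[of x2 "x2 + h", OF _ der] h by auto
  show ?thesis
    using that[OF \<xi>(1,2) \<eta>(1,2)] \<xi>(3) \<eta>(3) by (simp add: algebra_simps)
qed

lemma partials_family_second_difference_21:
  fixes U :: "pt set"
  assumes D: "partials_family U f D" and h: "h > 0"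
    and rect: "\<And>a c. x1 \<le> a \<Longrightarrow> a \<le> x1 + h \<Longrightarrow> x2 \<le> c \<Longrightarrow> c \<le> x2 + h \<Longrightarrow> (a, c) \<in> U"
  obtains \<xi> \<eta> where "x1 < \<xi>" "\<xi> < x1 + h" "x2 < \<eta>" "\<eta> < x2 + h"
    "f (x1 + h, x2 + h) - f (x1 + h, x2) - f (x1, x2 + h) + f (x1, x2) = h * h * D [(1,0), (0,1)] (\<xi>, \<eta>)"
proof -
  have f: "f = D []"
    using D by (simp add: partials_family_def)
  have der: "((\<lambda>c. f (x1 + h, c) - f (x1, c)) has_real_derivative
      D [(0,1)] (x1 + h, c) - D [(0,1)] (x1, c)) (at c)" if "x2 \<le> c" "c \<le> x2 + h" for c
    unfolding f using that h by (intro DERIV_diff partials_family_deriv_snd[OF D] rect) auto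
  obtain \<eta> where \<eta>: "x2 < \<eta>" "\<eta> < x2 + h"
    "(f (x1 + h, x2 + h) - f (x1, x2 + h)) - (f (x1 + h, x2) - f (x1, x2))
      = h * (D [(0,1)] (x1 + h, \<eta>) - D [(0,1)] (x1, \<eta>))"
    using MVT2[of x2 "x2 + h", OF _ der] h by auto
  have der: "((\<lambda>a. D [(0,1)] (a, \<eta>)) has_real_derivative D [(1,0), (0,1)] (a, \<eta>)) (at a)"
    if "x1 \<le> a" "a \<le> x1 + h" for a
    using that \<eta> by (intro partials_family_deriv_fst[OF D] rect) auto
  obtain \<xi> where \<xi>: "x1 < \<xi>" "\<xi> < x1 + h"
    "D [(0,1)] (x1 + h, \<eta>) - D [(0,1)] (x1, \<eta>) = h * D [(1,0), (0,1)] (\<xi>, \<eta>)"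
    using MVT2[of x1 "x1 + h", OF _ der] h by auto
  show ?thesis
    using that[OF \<xi>(1,2) \<eta>(1,2)] \<xi>(3) \<eta>(3) by (simp add: algebra_simps)
qed

lemma partials_family_mixed_mean_value:
  fixes U :: "pt set"
  assumes D: "partials_family U f D" and h: "h > 0"
    and rect: "\<And>a c. x1 \<le> a \<Longrightarrow> a \<le> x1 + h \<Longrightarrow> x2 \<le> c \<Longrightarrow> c \<le> x2 + h \<Longrightarrow> (a, c) \<in> U"
  obtains \<xi> \<eta> \<xi>' \<eta>' where "x1 < \<xi>" "\<xi> < x1 + h" "x2 < \<eta>" "\<eta> < x2 + h"
    "x1 < \<xi>'" "\<xi>' < x1 + h" "x2 < \<eta>'" "\<eta>' < x2 + h"
    "D [(0,1), (1,0)] (\<xi>, \<eta>) = D [(1,0), (0,1)] (\<xi>', \<eta>')"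
proof -
  obtain \<xi> \<eta> where \<xi>\<eta>: "x1 < \<xi>" "\<xi> < x1 + h" "x2 < \<eta>" "\<eta> < x2 + h"
    "f (x1 + h, x2 + h) - f (x1 + h, x2) - f (x1, x2 + h) + f (x1, x2) = h * h * D [(0,1), (1,0)] (\<xi>, \<eta>)"
    using partials_family_second_difference_12[OF D h rect] by blast
  obtain \<xi>' \<eta>' where \<xi>\<eta>': "x1 < \<xi>'" "\<xi>' < x1 + h" "x2 < \<eta>'" "\<eta>' < x2 + h"
    "f (x1 + h, x2 + h) - f (x1 + h, x2) - f (x1, x2 + h) + f (x1, x2) = h * h * D [(1,0), (0,1)] (\<xi>', \<eta>')"
    using partials_family_second_difference_21[OF D h rect] by blast
  show ?thesis
    using that[OF \<xi>\<eta>(1-4) \<xi>\<eta>'(1-4)] \<xi>\<eta>(5) \<xi>\<eta>'(5) h by simp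
qed

lemma partials_family_mixed_symmetric:
  fixes U :: "pt set"
  assumes D: "partials_family U f D" and U: "open U" and x: "x \<in> U"
  shows "D [(0,1), (1,0)] x = D [(1,0), (0,1)] x"
proof (rule ccontr)
  define f12 where "f12 = D [(0,1), (1,0)]"
  define f21 where "f21 = D [(1,0), (0,1)]"
  define e where "e = \<bar>f12 x - f21 x\<bar> / 2"
  assume "D [(0,1), (1,0)] x \<noteq> D [(1,0), (0,1)] x"
  then have e: "e > 0"
    by (simp add: e_def f12_def f21_def)
  obtain x1 x2 where x12: "x = (x1, x2)"
    by (cases x)
  obtain r where r: "r > 0" "\<And>a c. \<bar>a - x1\<bar> < r \<Longrightarrow> \<bar>c - x2\<bar> < r \<Longrightarrow> (a, c) \<in> U"
    using open_contains_square[OF U] x x12 by blast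
  have "continuous (at x) f12" "continuous (at x) f21"
    using partials_family_continuous_on[OF D] U x unfolding f12_def f21_def
    by (metis continuous_on_eq_continuous_at)+
  then obtain d1 d2 where d1: "d1 > 0" "\<And>y. dist y x < d1 \<Longrightarrow> dist (f12 y) (f12 x) < e"
    and d2: "d2 > 0" "\<And>y. dist y x < d2 \<Longrightarrow> dist (f21 y) (f21 x) < e"
    using e unfolding continuous_at_eps_delta by (metis (no_types))
  define h where "h = min r (min d1 d2) / 4"
  have h: "h > 0" "h < r"
    using r d1 d2 by (auto simp: h_def)
  have rect: "(a, c) \<in> U" if "x1 \<le> a" "a \<le> x1 + h" "x2 \<le> c" "c \<le> x2 + h" for a c
    using that h by (intro r(2)) auto
  have close: "dist (a, c) x < min d1 d2" if "x1 < a" "a < x1 + h" "x2 < c" "c < x2 + h" for a c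
  proof -
    have "dist (a, c) x \<le> \<bar>a - x1\<bar> + \<bar>c - x2\<bar>"
      by (simp add: x12 dist_Pair_Pair dist_real_def sqrt_sum_squares_le_sum_abs)
    also have "\<dots> < min d1 d2"
      using that r d1 d2 by (auto simp: h_def)
    finally show ?thesis .
  qed
  obtain \<xi> \<eta> \<xi>' \<eta>' where square: "x1 < \<xi>" "\<xi> < x1 + h" "x2 < \<eta>" "\<eta> < x2 + h"
    "x1 < \<xi>'" "\<xi>' < x1 + h" "x2 < \<eta>'" "\<eta>' < x2 + h" and eq: "f12 (\<xi>, \<eta>) = f21 (\<xi>', \<eta>')"
    using partials_family_mixed_mean_value[OF D h(1) rect] unfolding f12_def f21_def by blast
  have "dist (f12 (\<xi>, \<eta>)) (f12 x) < e" "dist (f21 (\<xi>', \<eta>')) (f21 x) < e"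
    using d1(2) d2(2) close[OF square(1-4)] close[OF square(5-8)] by auto
  with eq have "\<bar>f12 x - f21 x\<bar> < 2 * e"
    unfolding dist_real_def by arith
  then show False
    by (simp add: e_def)
qed

lemma reversible_grad_calR:
  assumes "reversible F"
  shows "grad F (calR y) = (- fst (grad F y), snd (grad F y))"
proof -
  have "ham_vf F (calR y) = - calR (ham_vf F y)"
    using assms unfolding reversible_def by blast
  then show ?thesis
    by (simp add: ham_vf_def calR_conv prod_eq_iff)
qed

lemma smooth_reversible_calR_invariant:
  fixes F :: "st \<Rightarrow> real"
  assumes smooth: "smooth_on UNIV F" and rev: "reversible F"
  shows "F (calR x) = F x"
proof -
  note grad_calR = reversible_grad_calR[OF rev]
  have line: "((\<lambda>t. F (z + t *\<^sub>R e)) has_real_derivative inner (grad F z) e) (at 0)" if "e \<in> Basis" for z e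
    using smooth_on_has_pd[OF smooth UNIV_I that] pd_Basis_inner_grad[OF that] by simp
  have "((\<lambda>t. F (calR (y + t *\<^sub>R e)) - F (y + t *\<^sub>R e)) has_real_derivative 0) (at 0)"
    if e: "e \<in> Basis" for y e
  proof -
    from e consider (q) a where "e = (a, 0)" | (p) a where "e = (0, a)"
      unfolding Basis_prod_def by blast
    then show ?thesis
    proof cases
      case q
      then have calR_line: "calR (y + t *\<^sub>R e) = calR y + (- t) *\<^sub>R e" for t
        by (simp add: calR_conv)
      have "((\<lambda>t. F (calR y + (- t) *\<^sub>R e)) has_real_derivative - inner (grad F (calR y)) e) (at 0)"
        using line[OF e, of "calR y"] DERIV_mirror[where f="\<lambda>t. F (calR y + t *\<^sub>R e)" and x=0] by simp
      moreover have "- inner (grad F (calR y)) e = inner (grad F y) e"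
        using grad_calR[of y] q by (simp add: inner_prod_def)
      ultimately have "((\<lambda>t. F (calR y + (- t) *\<^sub>R e)) has_real_derivative inner (grad F y) e) (at 0)"
        by simp
      from DERIV_diff[OF this line[OF e, of y]] show ?thesis
        by (simp add: calR_line)
    next
      case p
      then have calR_line: "calR (y + t *\<^sub>R e) = calR y + t *\<^sub>R e" for t
        by (simp add: calR_conv)
      have "inner (grad F (calR y)) e = inner (grad F y) e"
        using grad_calR[of y] p by (simp add: inner_prod_def)
      with DERIV_diff[OF line[OF e, of "calR y"] line[OF e, of y]] show ?thesis
        by (simp add: calR_line)
    qed
  qed
  from zero_line_derivatives_imp_constant[of "\<lambda>y. F (calR y) - F y", OF this]
  show ?thesis
    by simp
qed

section \<open>Evenness of the splitting function\<close>

lemma open_vertical_segment: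
  fixes U :: "pt set"
  assumes "open U" "(a, b) \<in> U"
  obtains d where "d > 0" "\<And>s. \<bar>s\<bar> < d \<Longrightarrow> (a, b + s) \<in> U"
proof -
  obtain d where "d > 0" "ball (a, b) d \<subseteq> U"
    using assms open_contains_ball by blast
  moreover have "dist (a, b) (a, b + s) = \<bar>s\<bar>" for s
    by (simp add: dist_Pair_Pair dist_real_def)
  ultimately show ?thesis
    using that by (auto simp: subset_iff)
qed

lemma grad_Ss_reflect_eq_grad_Su:
  assumes Wu: "{(q, grad Su q) | q. q \<in> Uu} = {x \<in> Wu_loc F E N. fst x \<in> Uu}"
    and Ws: "{(q, grad Ss q) | q. q \<in> Us} = {x \<in> Ws_loc F E (calR ` N). fst x \<in> Us}"
    and rev: "reversible F" and E: "calR E = E"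
    and q: "q \<in> Uu" "- q \<in> Us"
  shows "grad Ss (- q) = grad Su q"
proof -
  have "(q, grad Su q) \<in> Wu_loc F E N"
    using Wu q by blast
  from calR_Wu_loc_in_Ws_loc[OF this rev E] q(2)
  have "(- q, grad Su q) \<in> {(q, grad Ss q) | q. q \<in> Us}"
    unfolding Ws by simp
  then show ?thesis
    by auto
qed

lemma Lcal_even:
  fixes Su Ss :: "pt \<Rightarrow> real"
  assumes Wu: "{(q, grad Su q) | q. q \<in> Uu} = {x \<in> Wu_loc F E N. fst x \<in> Uu}"
    and Ws: "{(q, grad Ss q) | q. q \<in> Us} = {x \<in> Ws_loc F E (calR ` N). fst x \<in> Us}"
    and rev: "reversible F" and E: "calR E = E"
    and Uu: "open Uu" "(pi, 0) \<in> Uu" and Us: "open Us" "(- pi, 0) \<in> Us"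
    and Su: "smooth_on Uu Su" and Ss: "smooth_on Us Ss"
  shows "\<exists>\<delta>>0. \<forall>q2. \<bar>q2\<bar> < \<delta> \<longrightarrow> Lcal Su Ss \<sigma> (pi, q2) = Lcal Su Ss \<sigma> (pi, - q2)"
proof -
  obtain d1 where d1: "d1 > 0" "\<And>s. \<bar>s\<bar> < d1 \<Longrightarrow> (pi, s) \<in> Uu"
    using open_vertical_segment[OF Uu] by auto
  obtain d2 where d2: "d2 > 0" "\<And>s. \<bar>s\<bar> < d2 \<Longrightarrow> (- pi, s) \<in> Us"
    using open_vertical_segment[OF Us] by auto
  define d where "d = min d1 d2"
  define h where "h s = Su (pi, s) + Ss (- pi, - s)" for s
  have "(h has_real_derivative 0) (at s within ball 0 d)" if "s \<in> ball 0 d" for s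
  proof -
    have s: "(pi, s) \<in> Uu" "(- pi, - s) \<in> Us"
      using that d1 d2 by (auto simp: d_def)
    have "grad Ss (- (pi, s)) = grad Su (pi, s)"
      using grad_Ss_reflect_eq_grad_Su[OF Wu Ws rev E s(1)] s(2) by simp
    then have "pd Ss (0,1) (- pi, - s) = pd Su (0,1) (pi, s)"
      by (simp add: grad_pt)
    moreover have "((\<lambda>t. Ss (- pi, - t)) has_real_derivative - pd Ss (0,1) (- pi, - s)) (at s)"
      using smooth_on_deriv_snd[OF Ss s(2)] by (simp add: DERIV_mirror)
    ultimately have "(h has_real_derivative 0) (at s)"
      unfolding h_def[abs_def] using DERIV_add[OF smooth_on_deriv_snd[OF Su s(1)]] by fastforce
    then show ?thesis
      by (rule has_field_derivative_at_within)
  qed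
  then obtain c where "\<forall>s\<in>ball 0 d. h s = c"
    using has_field_derivative_zero_constant[OF convex_ball] by blast
  then have "h q2 = h (- q2)" if "\<bar>q2\<bar> < d" for q2
    using that by (auto simp: dist_real_def)
  moreover have "d > 0"
    using d1 d2 by (simp add: d_def)
  ultimately show ?thesis
    by (intro exI[of _ d]) (auto simp: Lcal_def Shat_def h_def algebra_simps)
qed

section \<open>Lipschitz bounds and uniqueness of solutions\<close>

definition bounded_lipschitz_on :: "'a::metric_space set \<Rightarrow> ('a \<Rightarrow> real) \<Rightarrow> bool" where
  "bounded_lipschitz_on S f \<longleftrightarrow> (\<exists>L. L-lipschitz_on S f) \<and> bounded (f ` S)"

lemma bounded_lipschitz_on_const: "bounded_lipschitz_on S (\<lambda>x. c)"
  unfolding bounded_lipschitz_on_def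
  by (auto intro: lipschitz_on_constant bounded_subset[of "{c}"])

lemma bounded_lipschitz_on_add:
  "bounded_lipschitz_on S f \<Longrightarrow> bounded_lipschitz_on S g \<Longrightarrow> bounded_lipschitz_on S (\<lambda>x. f x + g x)"
  unfolding bounded_lipschitz_on_def by (blast intro: lipschitz_on_add bounded_plus_comp)

lemma bounded_lipschitz_on_minus:
  "bounded_lipschitz_on S f \<Longrightarrow> bounded_lipschitz_on S (\<lambda>x. - f x)"
  unfolding bounded_lipschitz_on_def by simp

lemma bounded_lipschitz_on_mult:
  assumes "bounded_lipschitz_on S f" "bounded_lipschitz_on S g"
  shows "bounded_lipschitz_on S (\<lambda>x. f x * g x)"
proof -
  obtain Lf Lg Kf Kg where Lf: "Lf-lipschitz_on S f" and Lg: "Lg-lipschitz_on S g"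
    and Kf: "\<forall>x\<in>S. \<bar>f x\<bar> \<le> Kf" and Kg: "\<forall>x\<in>S. \<bar>g x\<bar> \<le> Kg" and "Kf > 0" "Kg > 0"
    using assms unfolding bounded_lipschitz_on_def bounded_pos by force
  have "(Kf * Lg + Lf * Kg)-lipschitz_on S (\<lambda>x. f x * g x)"
  proof (rule lipschitz_onI)
    fix x y assume xy: "x \<in> S" "y \<in> S"
    have "f x * g x - f y * g y = f x * (g x - g y) + (f x - f y) * g y"
      by (simp add: algebra_simps)
    then have "dist (f x * g x) (f y * g y) \<le> \<bar>f x\<bar> * dist (g x) (g y) + dist (f x) (f y) * \<bar>g y\<bar>"
      by (simp add: dist_real_def abs_mult[symmetric] abs_triangle_ineq)
    also have "\<dots> \<le> Kf * (Lg * dist x y) + (Lf * dist x y) * Kg"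
      using xy Kf Kg lipschitz_onD[OF Lf xy] lipschitz_onD[OF Lg xy] lipschitz_on_nonneg[OF Lf]
      by (intro add_mono mult_mono) auto
    finally show "dist (f x * g x) (f y * g y) \<le> (Kf * Lg + Lf * Kg) * dist x y"
      by (simp add: algebra_simps)
  next
    show "0 \<le> Kf * Lg + Lf * Kg"
      using \<open>Kf > 0\<close> \<open>Kg > 0\<close> lipschitz_on_nonneg[OF Lf] lipschitz_on_nonneg[OF Lg] by simp
  qed
  moreover have "\<bar>f x * g x\<bar> \<le> Kf * Kg" if "x \<in> S" for x
    using Kf Kg that \<open>Kf > 0\<close> by (simp add: abs_mult mult_mono)
  then have "bounded ((\<lambda>x. f x * g x) ` S)"
    unfolding bounded_pos using \<open>Kf > 0\<close> \<open>Kg > 0\<close> by (intro exI[of _ "Kf * Kg"]) auto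
  ultimately show ?thesis
    unfolding bounded_lipschitz_on_def by blast
qed

lemma bounded_lipschitz_on_compose:
  assumes "bounded_lipschitz_on T g" "L-lipschitz_on S h" "h ` S \<subseteq> T"
  shows "bounded_lipschitz_on S (\<lambda>x. g (h x))"
proof -
  obtain M where "M-lipschitz_on T g" "bounded (g ` T)"
    using assms(1) unfolding bounded_lipschitz_on_def by blast
  then show ?thesis
    unfolding bounded_lipschitz_on_def using assms(2,3)
    by (auto intro!: lipschitz_on_compose2 intro: lipschitz_on_subset bounded_subset)
qed

lemma bounded_linear_bounded_lipschitz_on:
  assumes "bounded_linear h" "bounded S"
  shows "bounded_lipschitz_on S h"
proof -
  obtain L where "L-lipschitz_on S h"
    using bounded_linear.lipschitz_boundE[OF assms(1)] by blast
  with bounded_linear_image[OF assms(2,1)] show ?thesis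
    unfolding bounded_lipschitz_on_def by blast
qed

lemma partials_family_bounded_lipschitz_on:
  fixes f :: "pt \<Rightarrow> real"
  assumes D: "partials_family UNIV f D"
  shows "bounded_lipschitz_on (cball 0 R) (D l)"
proof -
  have bounded: "bounded (D l' ` cball 0 R)" for l'
    using partials_family_continuous_on[OF D] continuous_on_subset[of UNIV "D l'" "cball 0 R"]
    by (intro compact_imp_bounded compact_continuous_image compact_cball) auto
  obtain M1 M2 where M1: "\<forall>x\<in>cball 0 R. \<bar>D ((1,0) # l) x\<bar> \<le> M1"
    and M2: "\<forall>x\<in>cball 0 R. \<bar>D ((0,1) # l) x\<bar> \<le> M2" and "M1 > 0" "M2 > 0"
    using bounded[of "(1,0) # l"] bounded[of "(0,1) # l"] unfolding bounded_pos by force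
  have "(M1 + M2)-lipschitz_on (cball 0 R) (D l)"
  proof (rule bounded_derivative_imp_lipschitz)
    fix x :: pt assume x: "x \<in> cball 0 R"
    show "(D l has_derivative (\<lambda>h. fst h * D ((1,0) # l) x + snd h * D ((0,1) # l) x)) (at x within cball 0 R)"
      using partials_family_has_derivative[OF D open_UNIV UNIV_I] by (rule has_derivative_at_withinI)
    show "onorm (\<lambda>h. fst h * D ((1,0) # l) x + snd h * D ((0,1) # l) x) \<le> M1 + M2"
    proof (rule onorm_le)
      fix h :: pt
      have "\<bar>fst h * D ((1,0) # l) x + snd h * D ((0,1) # l) x\<bar>
          \<le> \<bar>fst h\<bar> * \<bar>D ((1,0) # l) x\<bar> + \<bar>snd h\<bar> * \<bar>D ((0,1) # l) x\<bar>"
        by (simp add: abs_mult[symmetric] abs_triangle_ineq)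
      also have "\<dots> \<le> norm h * M1 + norm h * M2"
        using M1 M2 x norm_fst_le[of "fst h" "snd h"] norm_snd_le[of "snd h" "fst h"]
        by (intro add_mono mult_mono) auto
      finally show "norm (fst h * D ((1,0) # l) x + snd h * D ((0,1) # l) x) \<le> (M1 + M2) * norm h"
        by (simp add: algebra_simps)
    qed
  qed (use \<open>M1 > 0\<close> \<open>M2 > 0\<close> in auto)
  with bounded show ?thesis
    unfolding bounded_lipschitz_on_def by blast
qed

lemma gronwall_zero:
  fixes w :: "real \<Rightarrow> 'a::real_inner"
  assumes "w 0 = 0" "T \<ge> 0"
    and w': "\<And>t. 0 \<le> t \<Longrightarrow> t \<le> T \<Longrightarrow> (w has_vector_derivative w' t) (at t)"
    and growth: "\<And>t. 0 \<le> t \<Longrightarrow> t \<le> T \<Longrightarrow> inner (w t) (w' t) \<le> K * inner (w t) (w t)"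
  shows "w T = 0"
proof -
  define \<phi> where "\<phi> t = exp (- 2 * K * t) * inner (w t) (w t)" for t
  have "\<exists>y. (\<phi> has_real_derivative y) (at t) \<and> y \<le> 0" if t: "0 \<le> t" "t \<le> T" for t
  proof (intro exI conjI)
    have "((\<lambda>t. inner (w t) (w t)) has_real_derivative 2 * inner (w t) (w' t)) (at t)"
      using has_derivative_inner[OF w'[OF t, unfolded has_vector_derivative_def]
          w'[OF t, unfolded has_vector_derivative_def]]
      by (simp add: has_field_derivative_def inner_commute algebra_simps) (simp add: mult_commute_abs)
    then show "(\<phi> has_real_derivative exp (- 2 * K * t) * (2 * (inner (w t) (w' t) - K * inner (w t) (w t)))) (at t)"
      unfolding \<phi>_def[abs_def] by (auto intro!: derivative_eq_intros simp: algebra_simps)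
    show "exp (- 2 * K * t) * (2 * (inner (w t) (w' t) - K * inner (w t) (w t))) \<le> 0"
      using growth[OF t] by (simp add: mult_nonneg_nonpos)
  qed
  from DERIV_nonpos_imp_nonincreasing[OF assms(2) this] have "\<phi> T \<le> \<phi> 0"
    by blast
  then have "inner (w T) (w T) \<le> 0"
    using assms(1) by (simp add: \<phi>_def mult_le_0_iff)
  then show ?thesis
    by (metis inner_ge_zero inner_eq_zero_iff order_antisym)
qed

lemma ode_solution_unique_forward:
  fixes F :: "'a::real_inner \<Rightarrow> 'a"
  assumes lip: "\<And>R. \<exists>L. L-lipschitz_on (cball 0 R) F"
    and Y1: "\<And>t. (Y1 has_vector_derivative F (Y1 t)) (at t)"
    and Y2: "\<And>t. (Y2 has_vector_derivative F (Y2 t)) (at t)"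
    and "Y1 0 = Y2 0" "T \<ge> 0"
  shows "Y1 T = Y2 T"
proof -
  have "continuous_on {0..T} Y1" "continuous_on {0..T} Y2"
    using Y1 Y2 by (meson continuous_at_imp_continuous_on has_vector_derivative_continuous)+
  then have "bounded (Y1 ` {0..T} \<union> Y2 ` {0..T})"
    by (intro bounded_Un[THEN iffD2] conjI compact_imp_bounded compact_continuous_image compact_Icc)
  then obtain R where "\<forall>y\<in>Y1 ` {0..T} \<union> Y2 ` {0..T}. norm y \<le> R"
    unfolding bounded_iff by blast
  then have R: "Y1 t \<in> cball 0 R \<and> Y2 t \<in> cball 0 R" if "t \<in> {0..T}" for t
    using that by auto
  obtain K where K: "K-lipschitz_on (cball 0 R) F"
    using lip by blast
  have "(\<lambda>t. Y1 t - Y2 t) T = 0"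
  proof (rule gronwall_zero[where K=K])
    fix t assume t: "0 \<le> t" "t \<le> T"
    show "((\<lambda>t. Y1 t - Y2 t) has_vector_derivative F (Y1 t) - F (Y2 t)) (at t)"
      by (intro has_vector_derivative_diff Y1 Y2)
    have "inner (Y1 t - Y2 t) (F (Y1 t) - F (Y2 t)) \<le> norm (Y1 t - Y2 t) * norm (F (Y1 t) - F (Y2 t))"
      by (rule norm_cauchy_schwarz)
    also have "\<dots> \<le> norm (Y1 t - Y2 t) * (K * norm (Y1 t - Y2 t))"
      using lipschitz_on_normD[OF K] R[of t] t by (intro mult_left_mono) auto
    finally show "inner (Y1 t - Y2 t) (F (Y1 t) - F (Y2 t)) \<le> K * inner (Y1 t - Y2 t) (Y1 t - Y2 t)"
      by (simp add: power2_norm_eq_inner[symmetric] power2_eq_square algebra_simps)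
  qed (use \<open>Y1 0 = Y2 0\<close> \<open>T \<ge> 0\<close> in auto)
  then show ?thesis
    by simp
qed

lemma ode_solution_unique:
  fixes F :: "'a::real_inner \<Rightarrow> 'a"
  assumes lip: "\<And>R. \<exists>L. L-lipschitz_on (cball 0 R) F"
    and Y1: "\<And>t. (Y1 has_vector_derivative F (Y1 t)) (at t)"
    and Y2: "\<And>t. (Y2 has_vector_derivative F (Y2 t)) (at t)"
    and "Y1 0 = Y2 0"
  shows "Y1 = Y2"
proof
  fix T :: real
  show "Y1 T = Y2 T"
  proof (cases "T \<ge> 0")
    case True
    then show ?thesis
      by (rule ode_solution_unique_forward[OF lip Y1 Y2 \<open>Y1 0 = Y2 0\<close>])
  next
    case False
    have reflect: "((\<lambda>t. Y (- t)) has_vector_derivative - F (Y (- t))) (at t)"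
      if "\<And>t. (Y has_vector_derivative F (Y t)) (at t)" for Y :: "real \<Rightarrow> 'a" and t
      using has_vector_derivative_reflect[of Y "F (Y (- t))" t UNIV] that by simp
    have lip': "\<exists>L. L-lipschitz_on (cball 0 R) (\<lambda>x. - F x)" for R
      using lip[of R] by simp
    have "(\<lambda>t. Y1 (- t)) (- T) = (\<lambda>t. Y2 (- t)) (- T)"
      by (rule ode_solution_unique_forward[OF lip' reflect[OF Y1] reflect[OF Y2]])
        (use \<open>Y1 0 = Y2 0\<close> False in auto)
    then show ?thesis
      by simp
  qed
qed

lemma has_integral_reflect_UNIV_imp:
  fixes f :: "real \<Rightarrow> 'a::banach"
  assumes "(f has_integral i) UNIV"
  shows "((\<lambda>t. f (- t)) has_integral i) UNIV"
proof -
  have A: "\<And>a b. f integrable_on cbox a b"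
    and B: "\<forall>e>0. \<exists>B>0. \<forall>a b. ball 0 B \<subseteq> cbox a b \<longrightarrow> norm (integral (cbox a b) f - i) < e"
    using assms[unfolded has_integral_alt'] by auto
  have reflect_ball: "ball 0 B \<subseteq> {- b..- a}" if "ball 0 B \<subseteq> {a..b}" for a b B :: real
  proof
    fix x :: real assume "x \<in> ball 0 B"
    then have "- x \<in> {a..b}"
      using that by (auto simp: subset_iff)
    then show "x \<in> {- b..- a}"
      by auto
  qed
  have reflect_integral: "integral {a..b} (\<lambda>x. f (- x)) = integral {- b..- a} f" for a b :: real
    using Henstock_Kurzweil_Integration.integral_reflect_real[where f=f and a="- b" and b="- a"] by simp
  show ?thesis
    unfolding has_integral_alt'
  proof (intro conjI allI impI)
    fix a b :: real
    show "(\<lambda>x. if x \<in> UNIV then f (- x) else 0) integrable_on cbox a b"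
      using Henstock_Kurzweil_Integration.integrable_reflect_real[where f=f and a="- b" and b="- a"]
        A[of "- b" "- a"] by simp
  next
    fix e :: real
    assume "e > 0"
    with B obtain B where "B > 0" and B: "\<forall>a b. ball 0 B \<subseteq> cbox a b \<longrightarrow> norm (integral (cbox a b) f - i) < e"
      by blast
    with reflect_ball show "\<exists>B>0. \<forall>a b. ball 0 B \<subseteq> cbox a b \<longrightarrow>
        norm (integral (cbox a b) (\<lambda>x. if x \<in> UNIV then f (- x) else 0) - i) < e"
      by (intro exI[of _ B]) (auto simp: reflect_integral)
  qed
qed

lemma integral_reflect_UNIV:
  fixes f :: "real \<Rightarrow> 'a::banach"
  shows "integral UNIV (\<lambda>t. f (- t)) = integral UNIV f"
proof -
  have iff: "((\<lambda>t. f (- t)) has_integral i) UNIV \<longleftrightarrow> (f has_integral i) UNIV" for i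
    using has_integral_reflect_UNIV_imp[of f i] has_integral_reflect_UNIV_imp[of "\<lambda>t. f (- t)" i]
    by auto
  then have "(\<lambda>t. f (- t)) integrable_on UNIV \<longleftrightarrow> f integrable_on UNIV"
    by (simp add: integrable_on_def)
  with iff show ?thesis
    by (metis integrable_integral integral_unique not_integrable_integral)
qed

section \<open>Mechanical Hamiltonians\<close>

locale mechanical =
  fixes B :: "pt \<Rightarrow> pt \<Rightarrow> pt" and V :: "pt \<Rightarrow> real"
  assumes B_lin: "\<forall>q. linear (B q)"
    and B_sym: "\<forall>q p p'. inner (B q p) p' = inner p (B q p')"
    and B_smooth: "\<forall>u\<in>Basis. \<forall>v\<in>Basis. smooth_on UNIV (\<lambda>q. inner (B q u) v)"
    and V_smooth: "smooth_on UNIV V"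
begin

abbreviation H :: "st \<Rightarrow> real" where
  "H \<equiv> Ham B V"

definition DB11 :: "pt list \<Rightarrow> pt \<Rightarrow> real" where
  "DB11 = (SOME D. partials_family UNIV (\<lambda>q. inner (B q (1,0)) (1,0)) D)"

definition DB12 :: "pt list \<Rightarrow> pt \<Rightarrow> real" where
  "DB12 = (SOME D. partials_family UNIV (\<lambda>q. inner (B q (1,0)) (0,1)) D)"

definition DB22 :: "pt list \<Rightarrow> pt \<Rightarrow> real" where
  "DB22 = (SOME D. partials_family UNIV (\<lambda>q. inner (B q (0,1)) (0,1)) D)"

definition DV :: "pt list \<Rightarrow> pt \<Rightarrow> real" where
  "DV = (SOME D. partials_family UNIV V D)"

lemma partials_family_B:
  shows DB11: "partials_family UNIV (\<lambda>q. inner (B q (1,0)) (1,0)) DB11"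
    and DB12: "partials_family UNIV (\<lambda>q. inner (B q (1,0)) (0,1)) DB12"
    and DB22: "partials_family UNIV (\<lambda>q. inner (B q (0,1)) (0,1)) DB22"
  unfolding DB11_def DB12_def DB22_def
  by (rule partials_family_SOME, use B_smooth in \<open>simp add: Basis_pt\<close>)+

lemma DV: "partials_family UNIV V DV"
  unfolding DV_def by (rule partials_family_SOME[OF V_smooth])

lemma B_conv: "B q p = (fst p * DB11 [] q + snd p * DB12 [] q, fst p * DB12 [] q + snd p * DB22 [] q)"
proof -
  have lin: "linear (B q)"
    using B_lin by blast
  have "p = fst p *\<^sub>R (1,0) + snd p *\<^sub>R (0,1)"
    by (simp add: prod_eq_iff)
  then have "B q p = fst p *\<^sub>R B q (1,0) + snd p *\<^sub>R B q (0,1)"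
    by (metis linear_add[OF lin] linear_scale[OF lin])
  moreover have "B q (1,0) = (DB11 [] q, DB12 [] q)"
    using DB11 DB12 by (simp add: partials_family_def prod_eq_iff inner_prod_def)
  moreover have "inner (B q (0,1)) (1,0) = inner (B q (1,0)) (0,1)"
    using B_sym by (metis inner_commute)
  then have "B q (0,1) = (DB12 [] q, DB22 [] q)"
    using DB12 DB22 by (simp add: partials_family_def prod_eq_iff inner_prod_def)
  ultimately show ?thesis
    by (simp add: algebra_simps)
qed

lemma Ham_conv: "H = (\<lambda>(q, p). (fst p * fst p * DB11 [] q + 2 * fst p * snd p * DB12 [] q
    + snd p * snd p * DB22 [] q) / 2 + DV [] q)"
proof -
  have "DV [] = V"
    using DV by (simp add: partials_family_def)
  then show ?thesis
    by (auto simp: Ham_def B_conv inner_prod_def algebra_simps)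
qed

lemma Ham_differentiable: "H differentiable (at x)"
proof -
  have coeff: "(\<lambda>x. D l (fst x)) differentiable (at x)" if "partials_family UNIV g D" for g D l
    using differentiable_compose[of "D l" fst x, OF partials_family_differentiable[OF that]]
    by (simp add: o_def bounded_linear_imp_differentiable[OF bounded_linear_fst])
  have "(\<lambda>x. fst (snd x)) differentiable (at x)" "(\<lambda>x. snd (snd x)) differentiable (at x)"
    by (auto intro!: bounded_linear_imp_differentiable
        bounded_linear_compose[OF bounded_linear_fst bounded_linear_snd]
        bounded_linear_compose[OF bounded_linear_snd bounded_linear_snd])
  with coeff[OF DB11] coeff[OF DB12] coeff[OF DB22] coeff[OF DV] show ?thesis
    unfolding Ham_conv case_prod_beta
    by (intro differentiable_add differentiable_mult differentiable_divide differentiable_const) auto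
qed

lemma Ham_has_derivative: "(H has_derivative (\<lambda>h. inner (grad H x) h)) (at x)"
proof -
  obtain L where "(H has_derivative L) (at x)"
    using Ham_differentiable unfolding differentiable_def by blast
  with has_derivative_grad show ?thesis
    by metis
qed

definition dqHam :: "pt \<Rightarrow> st \<Rightarrow> real" where
  "dqHam b = (\<lambda>(q, p). (fst p * fst p * DB11 [b] q + 2 * fst p * snd p * DB12 [b] q
     + snd p * snd p * DB22 [b] q) / 2 + DV [b] q)"

lemma pd_Ham_q:
  assumes b: "b \<in> (Basis :: pt set)"
  shows "pd H (b, 0) x = dqHam b x"
proof (rule pd_eqI)
  have line: "((\<lambda>t. D [] (fst x + t *\<^sub>R b)) has_real_derivative D [b] (fst x)) (at 0)"
    if "partials_family UNIV g D" for g D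
    using that b unfolding partials_family_def by blast
  show "((\<lambda>t. H (x + t *\<^sub>R (b, 0))) has_real_derivative dqHam b x) (at 0)"
    unfolding Ham_conv dqHam_def case_prod_beta
    by (auto intro!: derivative_eq_intros line[OF DB11] line[OF DB12] line[OF DB22] line[OF DV])
qed

lemma grad_Ham: "grad H (q, p) = ((dqHam (1,0) (q, p), dqHam (0,1) (q, p)), B q p)"
proof -
  have p1: "pd H (0, (1,0)) (q, p) = fst p * DB11 [] q + snd p * DB12 [] q"
    by (rule pd_eqI) (auto simp: Ham_conv algebra_simps intro!: derivative_eq_intros)
  have p2: "pd H (0, (0,1)) (q, p) = fst p * DB12 [] q + snd p * DB22 [] q"
    by (rule pd_eqI) (auto simp: Ham_conv algebra_simps intro!: derivative_eq_intros)
  show ?thesis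
    using pd_Ham_q[of "(1,0)" "(q, p)"] pd_Ham_q[of "(0,1)" "(q, p)"]
    by (simp add: grad_st p1 p2 B_conv Basis_pt)
qed

lemma ham_vf_Ham: "ham_vf H x = (B (fst x) (snd x), - (dqHam (1,0) x, dqHam (0,1) x))"
  using grad_Ham[of "fst x" "snd x"] by (simp add: ham_vf_def)

lemma Ham_conserved:
  assumes "(y has_vector_derivative ham_vf H (y t)) (at t within S)"
  shows "((\<lambda>t. H (y t)) has_real_derivative 0) (at t within S)"
proof -
  have "inner (grad H x) (ham_vf H x) = 0" for x
    by (simp add: ham_vf_def inner_prod_def inner_commute)
  moreover have "(*) 0 = (\<lambda>h::real. 0::real)"
    by auto
  ultimately show ?thesis
    using has_derivative_compose[OF assms[unfolded has_vector_derivative_def] Ham_has_derivative]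
    by (simp add: has_field_derivative_def)
qed

lemma isCont_Ham: "isCont H x"
  by (rule differentiable_imp_continuous_within[OF Ham_differentiable])

lemma Ham_Wu_loc:
  assumes "x \<in> Wu_loc H E N"
  shows "H x = H E"
proof -
  from assms obtain y where "y 0 = x" and lim: "(y \<longlongrightarrow> E) at_bot"
    and yd: "\<And>t. t \<le> 0 \<Longrightarrow> (y has_vector_derivative ham_vf H (y t)) (at t within {..0})"
    unfolding Wu_loc_def by blast
  have "H (y 0) = H E"
  proof (rule zero_derivative_limit_eq[of "{..0}" 0 "\<lambda>t. H (y t)"])
    show "((\<lambda>t. H (y t)) \<longlongrightarrow> H E) at_bot"
      by (rule isCont_tendsto_compose[OF isCont_Ham lim])
  qed (auto intro: Ham_conserved yd simp: eventually_at_bot_linorder convex_real_interval)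
  with \<open>y 0 = x\<close> show ?thesis
    by simp
qed

lemma Ham_Ws_loc:
  assumes "x \<in> Ws_loc H E N"
  shows "H x = H E"
proof -
  from assms obtain y where "y 0 = x" and lim: "(y \<longlongrightarrow> E) at_top"
    and yd: "\<And>t. t \<ge> 0 \<Longrightarrow> (y has_vector_derivative ham_vf H (y t)) (at t within {0..})"
    unfolding Ws_loc_def by blast
  have "H (y 0) = H E"
  proof (rule zero_derivative_limit_eq[of "{0..}" 0 "\<lambda>t. H (y t)"])
    show "((\<lambda>t. H (y t)) \<longlongrightarrow> H E) at_top"
      by (rule isCont_tendsto_compose[OF isCont_Ham lim])
  qed (auto intro: Ham_conserved yd simp: eventually_at_top_linorder convex_real_interval)
  with \<open>y 0 = x\<close> show ?thesis
    by simp
qed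

text \<open>Differentiating the Hamilton-Jacobi equation gives \<open>H\<^sub>q + Hess f \<cdot> H\<^sub>p = 0\<close>, once the
  Hessian of \<open>f\<close> is known to be symmetric.\<close>

lemma Hamilton_Jacobi_hessian:
  assumes D: "partials_family U f D" and U: "open U" and q: "q \<in> U"
    and HJ: "\<And>y. y \<in> U \<Longrightarrow> H (y, grad f y) = 0"
  obtains J where "(grad f has_derivative J) (at q)"
    "J (snd (grad H (q, grad f q))) = - fst (grad H (q, grad f q))"
proof -
  define g where "g y = (D [(1,0)] y, D [(0,1)] y)" for y
  have fg: "grad f y = g y" if "y \<in> U" for y
    using partials_family_grad[OF D that] by (simp add: g_def)
  define J where "J h = (fst h * D [(1,0), (1,0)] q + snd h * D [(0,1), (1,0)] q,
                         fst h * D [(1,0), (0,1)] q + snd h * D [(0,1), (0,1)] q)" for h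
  have "(g has_derivative J) (at q)"
    unfolding g_def[abs_def] J_def[abs_def]
    by (intro has_derivative_Pair partials_family_has_derivative[OF D U q])
  then have gd: "(grad f has_derivative J) (at q)"
    by (rule has_derivative_transform_within_open[OF _ U q]) (use fg in auto)
  have hessian_sym: "inner w (J h) = inner (J w) h" for w h
    using partials_family_mixed_symmetric[OF D U q] by (simp add: J_def inner_prod_def algebra_simps)
  define G where "G = grad H (q, grad f q)"
  have "((\<lambda>y. H (y, grad f y)) has_derivative (\<lambda>h. inner G (h, J h))) (at q)"
    using has_derivative_compose[OF has_derivative_Pair[OF has_derivative_ident gd] Ham_has_derivative]
    by (simp add: G_def)
  moreover have "((\<lambda>y. H (y, grad f y)) has_derivative (\<lambda>h. 0)) (at q)"
    by (rule has_derivative_transform_within_open[OF _ U q, of "\<lambda>y. 0"]) (use HJ in auto)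
  ultimately have "(\<lambda>h. inner G (h, J h)) = (\<lambda>h. 0)"
    by (rule has_derivative_unique)
  moreover have "inner G (h, J h) = inner (J (snd G) + fst G) h" for h
    using hessian_sym[of "snd G" h] by (cases G) (simp add: inner_add_right inner_commute)
  ultimately have "inner (J (snd G) + fst G) h = 0" for h
    by metis
  from this[of "J (snd G) + fst G"] have "J (snd G) = - fst G"
    by (simp add: eq_neg_iff_add_eq_0)
  with gd show ?thesis
    using that unfolding G_def by blast
qed

lemma Hamilton_Jacobi_trajectory:
  assumes D: "partials_family U f D" and U: "open U" and SU: "\<And>y. y \<in> U \<Longrightarrow> S y = f y"
    and HJ: "\<And>y. y \<in> U \<Longrightarrow> H (y, grad S y) = 0"
    and u: "(u has_vector_derivative B (u t) (grad S (u t))) (at t)" "u t \<in> U"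
  shows "((\<lambda>s. (u s, grad S (u s))) has_vector_derivative ham_vf H (u t, grad S (u t))) (at t)"
proof -
  have Sf: "grad S y = grad f y" if "y \<in> U" for y
    by (rule grad_cong_open[OF U that SU])
  obtain J where J: "(grad f has_derivative J) (at (u t))"
      "J (snd (grad H (u t, grad f (u t)))) = - fst (grad H (u t, grad f (u t)))"
    using Hamilton_Jacobi_hessian[OF D U u(2)] HJ Sf by metis
  have u': "(u has_derivative (\<lambda>h. h *\<^sub>R snd (grad H (u t, grad f (u t))))) (at t)"
    using u Sf grad_Ham[of "u t"] by (simp add: has_vector_derivative_def)
  have "((\<lambda>s. grad f (u s)) has_vector_derivative - fst (grad H (u t, grad f (u t)))) (at t)"
    using has_derivative_compose[OF u' J(1)] J(2) has_derivative_linear[OF J(1)]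
    by (simp add: has_vector_derivative_def linear_scale)
  moreover have "\<forall>\<^sub>F s in nhds t. grad S (u s) = grad f (u s)"
  proof -
    have "isCont u t"
      using u(1) by (rule has_vector_derivative_continuous)
    then obtain T where "open T" "t \<in> T" "\<forall>s\<in>T. u s \<in> U"
      using U u(2) continuous_at_open by metis
    then have "\<forall>\<^sub>F s in nhds t. u s \<in> U"
      unfolding eventually_nhds by blast
    then show ?thesis
      by eventually_elim (use Sf in auto)
  qed
  ultimately have "((\<lambda>s. grad S (u s)) has_vector_derivative - fst (grad H (u t, grad f (u t)))) (at t)"
    using has_vector_derivative_cong_ev[where f="\<lambda>s. grad S (u s)" and g="\<lambda>s. grad f (u s)"
        and x=t and S=UNIV] Sf[OF u(2)]
    by simp
  from has_vector_derivative_Pair[OF u(1) this] show ?thesis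
    using Sf[OF u(2)] by (simp add: ham_vf_def grad_Ham)
qed

lemma ham_vf_Ham_lipschitz: "\<exists>L. L-lipschitz_on (cball 0 R) (ham_vf H)"
proof -
  let ?S = "cball (0::st) R"
  obtain L where L: "L-lipschitz_on ?S fst"
    using bounded_linear.lipschitz_boundE[OF bounded_linear_fst] by blast
  have coeff: "bounded_lipschitz_on ?S (\<lambda>x. D l (fst x))" if "partials_family UNIV g D" for g D l
    by (rule bounded_lipschitz_on_compose[OF partials_family_bounded_lipschitz_on[OF that] L])
      (auto intro: order_trans[OF norm_fst_le])
  have "bounded_lipschitz_on ?S (\<lambda>x. fst (snd x))" "bounded_lipschitz_on ?S (\<lambda>x. snd (snd x))"
    by (auto intro!: bounded_linear_bounded_lipschitz_on
        bounded_linear_compose[OF bounded_linear_fst bounded_linear_snd]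
        bounded_linear_compose[OF bounded_linear_snd bounded_linear_snd])
  note blip = this coeff[OF DB11] coeff[OF DB12] coeff[OF DB22] coeff[OF DV]
    bounded_lipschitz_on_add bounded_lipschitz_on_mult bounded_lipschitz_on_minus bounded_lipschitz_on_const
  have "bounded_lipschitz_on ?S (\<lambda>x. fst (snd x) * DB11 [] (fst x) + snd (snd x) * DB12 [] (fst x))"
    "bounded_lipschitz_on ?S (\<lambda>x. fst (snd x) * DB12 [] (fst x) + snd (snd x) * DB22 [] (fst x))"
    "bounded_lipschitz_on ?S (\<lambda>x. - dqHam b x)" for b
    unfolding dqHam_def case_prod_beta divide_inverse by (intro blip)+
  then have "bounded_lipschitz_on ?S (\<lambda>x. fst (fst (ham_vf H x)))" "bounded_lipschitz_on ?S (\<lambda>x. snd (fst (ham_vf H x)))"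
    "bounded_lipschitz_on ?S (\<lambda>x. fst (snd (ham_vf H x)))" "bounded_lipschitz_on ?S (\<lambda>x. snd (snd (ham_vf H x)))"
    by (simp_all add: ham_vf_Ham B_conv)
  then obtain L1 L2 L3 L4 where "L1-lipschitz_on ?S (\<lambda>x. fst (fst (ham_vf H x)))"
    "L2-lipschitz_on ?S (\<lambda>x. snd (fst (ham_vf H x)))" "L3-lipschitz_on ?S (\<lambda>x. fst (snd (ham_vf H x)))"
    "L4-lipschitz_on ?S (\<lambda>x. snd (snd (ham_vf H x)))"
    unfolding bounded_lipschitz_on_def by blast
  from lipschitz_on_Pair[OF lipschitz_on_Pair[OF this(1,2)] lipschitz_on_Pair[OF this(3,4)]]
  show ?thesis
    by auto
qed

lemma ham_vf_Heps:
  assumes "smooth_on UNIV Hs"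
  shows "ham_vf (Heps B V Hs \<epsilon>) x = ham_vf H x + \<epsilon> *\<^sub>R ham_vf Hs x"
proof -
  have "pd (Heps B V Hs \<epsilon>) e x = pd H e x + \<epsilon> * pd Hs e x" if "e \<in> Basis" for e
    unfolding Heps_def using DERIV_add[OF has_derivative_pd[OF Ham_has_derivative]
        DERIV_cmult[OF smooth_on_has_pd[OF assms UNIV_I that]]]
    by (intro pd_eqI) (simp add: pd_Basis_inner_grad[OF that])
  then have "grad (Heps B V Hs \<epsilon>) x = grad H x + \<epsilon> *\<^sub>R grad Hs x"
    unfolding grad_def by (simp add: scaleR_add_left sum.distrib scaleR_sum_right)
  then show ?thesis
    by (simp add: ham_vf_def)
qed

lemma reversible_perturbation:
  assumes "smooth_on UNIV Hs" "\<epsilon> \<noteq> 0" "reversible (Heps B V Hs \<epsilon>)" "reversible H"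
  shows "reversible Hs"
  unfolding reversible_def
proof
  fix y
  have lin: "calR (a + c *\<^sub>R b) = calR a + c *\<^sub>R calR b" for a b c
    by (simp add: calR_conv)
  have "ham_vf H (calR y) + \<epsilon> *\<^sub>R ham_vf Hs (calR y) = - calR (ham_vf H y + \<epsilon> *\<^sub>R ham_vf Hs y)"
    using assms(3) unfolding reversible_def ham_vf_Heps[OF assms(1)] by blast
  moreover have "ham_vf H (calR y) = - calR (ham_vf H y)"
    using assms(4) unfolding reversible_def by blast
  ultimately have "\<epsilon> *\<^sub>R ham_vf Hs (calR y) = \<epsilon> *\<^sub>R (- calR (ham_vf Hs y))"
    by (simp add: lin)
  then show "ham_vf Hs (calR y) = - calR (ham_vf Hs y)"
    using assms(2) by (metis scaleR_cancel_left)
qed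

lemma perturbation_calR_invariant:
  assumes "smooth_on UNIV Hs" "\<epsilon> \<noteq> 0" "reversible (Heps B V Hs \<epsilon>)" "reversible H"
  shows "Hs (calR x) = Hs x"
  by (rule smooth_reversible_calR_invariant[OF assms(1) reversible_perturbation[OF assms]])

lemma Ham_periodic:
  assumes "periodic2 B" "periodic2 V"
  shows "H (x + ((2*pi,0), 0)) = H x"
proof -
  have "B (fst x + (2*pi,0)) = B (fst x)" "V (fst x + (2*pi,0)) = V (fst x)"
    using assms unfolding periodic2_def by blast+
  then show ?thesis
    by (simp add: Ham_def)
qed

lemma reflected_translated_solution:
  assumes per: "\<And>x. H (x + c) = H x" and rev: "reversible H"
    and X: "\<And>t. (X has_vector_derivative ham_vf H (X t)) (at t)"
  shows "((\<lambda>t. calR (X (- t)) + c) has_vector_derivative ham_vf H (calR (X (- t)) + c)) (at t)"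
proof -
  have "((\<lambda>t. calR (X (- t))) has_vector_derivative ham_vf H (calR (X (- t)))) (at t)"
    using reversible_reflected_solution[OF rev, of X t UNIV] X by simp
  then show ?thesis
    unfolding has_vector_derivative_add_const[of "\<lambda>t. calR (X (- t))" c] ham_vf_translate[of H c, OF per] .
qed

end

section \<open>Loops of type (B)\<close>

locale type_B_loop = mechanical B V for B V +
  fixes Su Ss :: "pt \<Rightarrow> real" and Uu Us :: "pt set" and \<sigma> :: real and E :: st and N :: "st set"
  assumes B_per: "periodic2 B" and V_per: "periodic2 V"
    and H_rev: "reversible H" and H_E: "H E = 0" and calR_E: "calR E = E"
    and Uu: "open Uu" "(pi, 0) \<in> Uu" and Us: "open Us" "(- pi, 0) \<in> Us"
    and Su: "smooth_on Uu Su" and Ss: "smooth_on Us Ss"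
    and Wu: "{(q, grad Su q) | q. q \<in> Uu} = {x \<in> Wu_loc H E N. fst x \<in> Uu}"
    and Ws: "{(q, grad Ss q) | q. q \<in> Us} = {x \<in> Ws_loc H E (calR ` N). fst x \<in> Us}"
    and type_B: "typeB Su Uu Ss Us \<sigma>"
begin

abbreviation S :: "pt \<Rightarrow> real" where
  "S \<equiv> Sglue Su Uu Ss \<sigma>"

abbreviation Us_shift :: "pt set" where
  "Us_shift \<equiv> (\<lambda>q. q + (2*pi, 0)) ` Us"

lemma mem_Us_shift: "y \<in> Us_shift \<longleftrightarrow> y - (2*pi, 0) \<in> Us"
  by (auto simp: image_iff intro!: bexI[of _ "y - (2*pi, 0)"])

lemma open_Us_shift: "open Us_shift"
proof -
  have "Us_shift = (\<lambda>q. q - (2*pi, 0)) -` Us"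
    using mem_Us_shift by auto
  then show ?thesis
    using Us(1) by (auto intro!: open_vimage continuous_intros)
qed

lemma S_Uu: "y \<in> Uu \<Longrightarrow> S y = Su y"
  by (simp add: Sglue_def)

lemma S_Us_shift: "y \<in> Us_shift \<Longrightarrow> S y = Shat Ss \<sigma> y"
  using type_B unfolding typeB_def Sglue_def by auto

lemma grad_S_Uu: "y \<in> Uu \<Longrightarrow> grad S y = grad Su y"
  by (rule grad_cong_open[OF Uu(1) _ S_Uu])

lemma grad_S_Us_shift: "y \<in> Us_shift \<Longrightarrow> grad S y = grad Ss (y - (2*pi, 0))"
  using grad_cong_open[OF open_Us_shift _ S_Us_shift] grad_Shat by simp

lemma Hamilton_Jacobi_S:
  assumes "y \<in> Sdom Uu Us"
  shows "H (y, grad S y) = 0"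
proof (cases "y \<in> Uu")
  case True
  then have "(y, grad Su y) \<in> Wu_loc H E N"
    using Wu by blast
  with True show ?thesis
    using Ham_Wu_loc H_E grad_S_Uu by simp
next
  case False
  then have y: "y \<in> Us_shift"
    using assms by (simp add: Sdom_def)
  then have "(y - (2*pi, 0), grad Ss (y - (2*pi, 0))) \<in> Ws_loc H E (calR ` N)"
    using Ws mem_Us_shift by blast
  then have "H (y - (2*pi, 0), grad S y) = 0"
    using Ham_Ws_loc H_E grad_S_Us_shift[OF y] by simp
  moreover have "(y, grad S y) = (y - (2*pi, 0), grad S y) + ((2*pi, 0), 0)"
    by simp
  ultimately show ?thesis
    by (metis Ham_periodic[OF B_per V_per])
qed

lemma S_trajectory:
  assumes u: "(u has_vector_derivative B (u t) (grad S (u t))) (at t)" "u t \<in> Sdom Uu Us"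
  shows "((\<lambda>s. (u s, grad S (u s))) has_vector_derivative ham_vf H (u t, grad S (u t))) (at t)"
proof (cases "u t \<in> Uu")
  case True
  obtain D where "partials_family Uu Su D"
    using Su smooth_on_iff_partials_family by blast
  from Hamilton_Jacobi_trajectory[OF this Uu(1) S_Uu _ u(1) True] show ?thesis
    using Hamilton_Jacobi_S by (simp add: Sdom_def)
next
  case False
  then have "u t \<in> Us_shift"
    using u(2) by (simp add: Sdom_def)
  obtain D where "partials_family Us Ss D"
    using Ss smooth_on_iff_partials_family by blast
  then obtain D' where "partials_family Us_shift (Shat Ss \<sigma>) D'"
    using partials_family_translate[of Us Ss D "(2*pi, 0)" \<sigma>] unfolding Shat_def[abs_def] by blast
  from Hamilton_Jacobi_trajectory[OF this open_Us_shift S_Us_shift _ u(1) \<open>u t \<in> Us_shift\<close>] show ?thesis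
    using Hamilton_Jacobi_S by (simp add: Sdom_def)
qed

lemma grad_S_reflect:
  assumes "(pi, s) \<in> Uu" "(- pi, - s) \<in> Us"
  shows "grad S (pi, - s) = grad S (pi, s)"
proof -
  have "(pi, - s) \<in> Us_shift"
    using assms(2) mem_Us_shift by simp
  then have "grad S (pi, - s) = grad Ss (- (pi, s))"
    by (simp add: grad_S_Us_shift)
  also have "\<dots> = grad Su (pi, s)"
    using grad_Ss_reflect_eq_grad_Su[OF Wu Ws H_rev calR_E assms(1)] assms(2) by simp
  finally show ?thesis
    using grad_S_Uu[OF assms(1)] by simp
qed

definition S_orbit :: "(real \<Rightarrow> pt \<Rightarrow> pt) \<Rightarrow> pt \<Rightarrow> bool" where
  "S_orbit qc q \<longleftrightarrow> qc 0 q = q \<and> (\<forall>t. qc t q \<in> Sdom Uu Us \<and>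
     ((\<lambda>s. qc s q) has_vector_derivative B (qc t q) (grad S (qc t q))) (at t))"

definition xcheck :: "(real \<Rightarrow> pt \<Rightarrow> pt) \<Rightarrow> pt \<Rightarrow> real \<Rightarrow> st" where
  "xcheck qc q t = (qc t q, grad S (qc t q))"

lemma xcheck_trajectory:
  "S_orbit qc q \<Longrightarrow> (xcheck qc q has_vector_derivative ham_vf H (xcheck qc q t)) (at t)"
  unfolding S_orbit_def xcheck_def[abs_def] using S_trajectory by blast

lemma xcheck_reflect:
  assumes orbits: "S_orbit qc (pi, s)" "S_orbit qc (pi, - s)"
    and "(pi, s) \<in> Uu" "(- pi, - s) \<in> Us"
  shows "xcheck qc (pi, - s) = (\<lambda>t. calR (xcheck qc (pi, s) (- t)) + ((2*pi, 0), 0))"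
proof (rule sym, rule ode_solution_unique[OF ham_vf_Ham_lipschitz _ xcheck_trajectory[OF orbits(2)]])
  show "((\<lambda>t. calR (xcheck qc (pi, s) (- t)) + ((2*pi, 0), 0)) has_vector_derivative
      ham_vf H (calR (xcheck qc (pi, s) (- t)) + ((2*pi, 0), 0))) (at t)" for t
    by (rule reflected_translated_solution[OF Ham_periodic[OF B_per V_per] H_rev
          xcheck_trajectory[OF orbits(1)]])
  show "calR (xcheck qc (pi, s) (- 0)) + ((2*pi, 0), 0) = xcheck qc (pi, - s) 0"
    using orbits grad_S_reflect[OF assms(3,4)] by (simp add: S_orbit_def xcheck_def)
qed

lemma Lmel_reflect:
  assumes Hs_per: "\<forall>p. periodic2 (\<lambda>q. Hs (q, p))" and Hs_calR: "\<And>x. Hs (calR x) = Hs x"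
    and "S_orbit qc (pi, s)" "S_orbit qc (pi, - s)" "(pi, s) \<in> Uu" "(- pi, - s) \<in> Us"
  shows "Lmel Hs qc S (pi, - s) = Lmel Hs qc S (pi, s)"
proof -
  have Hs_shift: "Hs (x + ((2*pi, 0), 0)) = Hs x" for x
  proof -
    have "Hs (fst x + (2*pi, 0), snd x) = Hs (fst x, snd x)"
      using Hs_per unfolding periodic2_def by blast
    then show ?thesis
      by (cases x) simp
  qed
  have "Hs (xcheck qc (pi, - s) t) = Hs (xcheck qc (pi, s) (- t))" for t
    using xcheck_reflect[OF assms(3-6)] by (simp add: Hs_shift Hs_calR)
  then have "Lmel Hs qc S (pi, - s) = - integral UNIV (\<lambda>t. Hs (xcheck qc (pi, s) (- t)) - Hs ((0,0),(0,0)))"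
    by (simp add: Lmel_def xcheck_def[symmetric])
  also have "\<dots> = Lmel Hs qc S (pi, s)"
    using integral_reflect_UNIV[of "\<lambda>t. Hs (xcheck qc (pi, s) t) - Hs ((0,0),(0,0))"]
    by (simp add: Lmel_def xcheck_def)
  finally show ?thesis .
qed

lemma Lmel_even:
  assumes Hs_per: "\<forall>p. periodic2 (\<lambda>q. Hs (q, p))" and Hs_calR: "\<And>x. Hs (calR x) = Hs x"
    and qc: "\<exists>W0. open W0 \<and> (pi, 0) \<in> W0 \<and>
               (\<forall>q\<in>W0. qc 0 q = q \<and>
                  (\<forall>t. qc t q \<in> Sdom Uu Us \<and>
                       ((\<lambda>s. qc s q) has_vector_derivative B (qc t q) (grad S (qc t q))) (at t)))"
  shows "\<exists>\<delta>>0. \<forall>q2. \<bar>q2\<bar> < \<delta> \<longrightarrow> Lmel Hs qc S (pi, q2) = Lmel Hs qc S (pi, - q2)"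
proof -
  obtain W0 where W0: "open W0" "(pi, 0) \<in> W0" "\<And>q. q \<in> W0 \<Longrightarrow> S_orbit qc q"
    using qc unfolding S_orbit_def by blast
  obtain d1 where d1: "d1 > 0" "\<And>s. \<bar>s\<bar> < d1 \<Longrightarrow> (pi, s) \<in> Uu \<inter> W0"
    using open_vertical_segment[OF open_Int[OF Uu(1) W0(1)], of pi 0] Uu(2) W0(2) by auto
  obtain d2 where d2: "d2 > 0" "\<And>s. \<bar>s\<bar> < d2 \<Longrightarrow> (- pi, s) \<in> Us"
    using open_vertical_segment[OF Us] by auto
  have "Lmel Hs qc S (pi, - s) = Lmel Hs qc S (pi, s)" if "\<bar>s\<bar> < min d1 d2" for s
    using that d1(2)[of s] d1(2)[of "- s"] d2(2)[of "- s"]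
    by (intro Lmel_reflect[OF Hs_per Hs_calR] W0(3)) auto
  with d1(1) d2(1) show ?thesis
    by (intro exI[of _ "min d1 d2"]) (auto simp del: Lmel_def)
qed

end

theorem proposition9:
  fixes B :: "pt \<Rightarrow> pt \<Rightarrow> pt" and V :: "pt \<Rightarrow> real" and Hs :: "st \<Rightarrow> real"
    and \<epsilon>0 a' :: real and gam :: "real \<Rightarrow> st" and Oe :: "real \<Rightarrow> st"
    and Uu Us :: "real \<Rightarrow> pt set" and Su Ss :: "real \<Rightarrow> pt \<Rightarrow> real"
    and N :: "real \<Rightarrow> st set" and \<sigma> :: "real \<Rightarrow> real"
    and qc :: "real \<Rightarrow> pt \<Rightarrow> pt"
  assumes B_lin: "\<forall>q. linear (B q)"
    and B_sym: "\<forall>q p p'. inner (B q p) p' = inner p (B q p')"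
    and B_pos: "\<forall>q p. p \<noteq> 0 \<longrightarrow> inner (B q p) p > 0"
    and B_smooth: "\<forall>u\<in>Basis. \<forall>v\<in>Basis. smooth_on UNIV (\<lambda>q. inner (B q u) v)"
    and B_per: "periodic2 B"
    and B_q2: "\<forall>q1. \<forall>u\<in>Basis. \<forall>v\<in>Basis. pd (\<lambda>q. inner (B q u) v) (0,1) (q1,0) = 0"
    and V_smooth: "smooth_on UNIV V" and V_per: "periodic2 V" and V0: "V (0,0) = 0"
    and V_max: "\<exists>r>0. \<forall>q\<in>ball (0,0) r. V q \<le> V (0,0)"
    and V_nondeg: "pd (pd V (1,0)) (1,0) (0,0) * pd (pd V (0,1)) (0,1) (0,0)
                   - pd (pd V (0,1)) (1,0) (0,0) * pd (pd V (1,0)) (0,1) (0,0) \<noteq> 0"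
    and Hs_smooth: "smooth_on UNIV Hs"
    and Hs_per: "\<forall>p. periodic2 (\<lambda>q. Hs (q, p))"
    and gam_sol: "\<forall>t. (gam has_vector_derivative ham_vf (Ham B V) (gam t)) (at t)"
    and gam_q2: "\<forall>t. snd (fst (gam t)) = 0"
    and gam_incr: "strict_mono (\<lambda>t. fst (fst (gam t)))"
    and gam_minus: "(gam \<longlongrightarrow> ((0,0),(0,0))) at_bot"
    and gam_plus: "(gam \<longlongrightarrow> ((2*pi,0),(0,0))) at_top"
    and eps0: "\<epsilon>0 > 0" and a'_pos: "a' > 0"
    and O_0: "Oe 0 = ((0,0),(0,0))"
    and O_cont: "continuous_on {-\<epsilon>0<..<\<epsilon>0} Oe"
    and O_eq: "\<forall>\<epsilon>. \<bar>\<epsilon>\<bar> < \<epsilon>0 \<longrightarrow> ham_vf (Heps B V Hs \<epsilon>) (Oe \<epsilon>) = 0"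
    and O_unique: "\<exists>r>0. \<forall>\<epsilon>. \<bar>\<epsilon>\<bar> < \<epsilon>0 \<longrightarrow> Oe \<epsilon> \<in> ball ((0,0),(0,0)) r \<and>
                     (\<forall>x\<in>ball ((0,0),(0,0)) r. ham_vf (Heps B V Hs \<epsilon>) x = 0 \<longrightarrow> x = Oe \<epsilon>)"
    and Uu_open: "\<forall>\<epsilon>. \<bar>\<epsilon>\<bar> < \<epsilon>0 \<longrightarrow> open (Uu \<epsilon>)"
    and Us_open: "\<forall>\<epsilon>. \<bar>\<epsilon>\<bar> < \<epsilon>0 \<longrightarrow> open (Us \<epsilon>)"
    and N_open: "\<forall>\<epsilon>. \<bar>\<epsilon>\<bar> < \<epsilon>0 \<longrightarrow> open (N \<epsilon>)"
    and Uu_arc: "\<forall>\<epsilon>. \<bar>\<epsilon>\<bar> < \<epsilon>0 \<longrightarrow> (\<forall>q1\<in>{0..pi+a'}. (q1,0) \<in> Uu \<epsilon>)"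
    and Us_arc: "\<forall>\<epsilon>. \<bar>\<epsilon>\<bar> < \<epsilon>0 \<longrightarrow> (\<forall>q1\<in>{-pi-a'..0}. (q1,0) \<in> Us \<epsilon>)"
    and Su_smooth: "\<forall>\<epsilon>. \<bar>\<epsilon>\<bar> < \<epsilon>0 \<longrightarrow> smooth_on (Uu \<epsilon>) (Su \<epsilon>)"
    and Ss_smooth: "\<forall>\<epsilon>. \<bar>\<epsilon>\<bar> < \<epsilon>0 \<longrightarrow> smooth_on (Us \<epsilon>) (Ss \<epsilon>)"
    and Wu_graph: "\<forall>\<epsilon>. \<bar>\<epsilon>\<bar> < \<epsilon>0 \<longrightarrow>
        {(q, grad (Su \<epsilon>) q) | q. q \<in> Uu \<epsilon>} =
        {x \<in> Wu_loc (Heps B V Hs \<epsilon>) (Oe \<epsilon>) (N \<epsilon>). fst x \<in> Uu \<epsilon>}"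
    and Ws_graph: "\<forall>\<epsilon>. \<bar>\<epsilon>\<bar> < \<epsilon>0 \<longrightarrow>
        {(q, grad (Ss \<epsilon>) q) | q. q \<in> Us \<epsilon>} =
        {x \<in> Ws_loc (Heps B V Hs \<epsilon>) (Oe \<epsilon>) (calR ` N \<epsilon>). fst x \<in> Us \<epsilon>}"
    and rev: "\<forall>\<epsilon>. \<bar>\<epsilon>\<bar> < \<epsilon>0 \<longrightarrow> reversible (Heps B V Hs \<epsilon>)"
  shows "(\<forall>\<epsilon>. \<bar>\<epsilon>\<bar> < \<epsilon>0 \<longrightarrow>
            (\<exists>\<delta>>0. \<forall>q2. \<bar>q2\<bar> < \<delta> \<longrightarrow>
               Lcal (Su \<epsilon>) (Ss \<epsilon>) (\<sigma> \<epsilon>) (pi, q2) = Lcal (Su \<epsilon>) (Ss \<epsilon>) (\<sigma> \<epsilon>) (pi, - q2)))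
       \<and> (typeB (Su 0) (Uu 0) (Ss 0) (Us 0) (\<sigma> 0) \<longrightarrow>
            (\<exists>W0. open W0 \<and> (pi, 0) \<in> W0 \<and>
               (\<forall>q\<in>W0. qc 0 q = q \<and>
                  (\<forall>t. qc t q \<in> Sdom (Uu 0) (Us 0) \<and>
                       ((\<lambda>s. qc s q) has_vector_derivative
                          B (qc t q) (grad (Sglue (Su 0) (Uu 0) (Ss 0) (\<sigma> 0)) (qc t q))) (at t)))) \<longrightarrow>
            (\<exists>\<delta>>0. \<forall>q2. \<bar>q2\<bar> < \<delta> \<longrightarrow>
               Lmel Hs qc (Sglue (Su 0) (Uu 0) (Ss 0) (\<sigma> 0)) (pi, q2)
               = Lmel Hs qc (Sglue (Su 0) (Uu 0) (Ss 0) (\<sigma> 0)) (pi, - q2)))"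
proof -
  interpret mechanical B V
    using B_lin B_sym B_smooth V_smooth by unfold_locales
  have Heps0: "Heps B V Hs 0 = H"
    by (simp add: Heps_def[abs_def])
  have rev_H: "reversible H"
    using rev eps0 by (metis Heps0 abs_zero)
  obtain r where "r > 0" and r: "\<And>\<epsilon>. \<bar>\<epsilon>\<bar> < \<epsilon>0 \<Longrightarrow> Oe \<epsilon> \<in> ball 0 r \<and>
      (\<forall>x\<in>ball 0 r. ham_vf (Heps B V Hs \<epsilon>) x = 0 \<longrightarrow> x = Oe \<epsilon>)"
    using O_unique unfolding zero_prod_def[symmetric] by blast
  have calR_O: "calR (Oe \<epsilon>) = Oe \<epsilon>" if "\<bar>\<epsilon>\<bar> < \<epsilon>0" for \<epsilon>
    using reversible_isolated_equilibrium_calR_fixed r[OF that] rev O_eq that by blast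
  have arcs: "(pi, 0) \<in> Uu \<epsilon>" "(- pi, 0) \<in> Us \<epsilon>" if "\<bar>\<epsilon>\<bar> < \<epsilon>0" for \<epsilon>
    using Uu_arc Us_arc that a'_pos pi_gt_zero by auto
  show ?thesis
  proof (intro conjI impI allI, goal_cases)
    case (1 \<epsilon>)
    show ?case
      by (rule Lcal_even[OF Wu_graph[rule_format, OF 1] Ws_graph[rule_format, OF 1] rev[rule_format, OF 1]
            calR_O[OF 1] Uu_open[rule_format, OF 1] arcs(1)[OF 1] Us_open[rule_format, OF 1]
            arcs(2)[OF 1] Su_smooth[rule_format, OF 1] Ss_smooth[rule_format, OF 1]])
  next
    case 2
    have Hs_calR: "Hs (calR x) = Hs x" for x
      using perturbation_calR_invariant[OF Hs_smooth _ _ rev_H, of "\<epsilon>0 / 2"] rev eps0 by simp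
    interpret type_B_loop B V "Su 0" "Ss 0" "Uu 0" "Us 0" "\<sigma> 0" "Oe 0" "N 0"
      using B_per V_per rev_H calR_O[of 0] arcs[of 0] Uu_open Us_open Su_smooth Ss_smooth
        Wu_graph Ws_graph 2(1) eps0 O_0 V0
      by unfold_locales (auto simp: Heps0 Ham_def zero_prod_def[symmetric])
    show ?case
      by (rule Lmel_even[OF Hs_per Hs_calR 2(2)])
  qed
qed

end
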